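(* There exists a two-stack automaton $\Gamma_1$ such that $\alpha_n:=G(\Gamma_1,n)\in\{0,1\}$ for all $n$, and such that the infinite binary word $\alpha_1\alpha_2\alpha_3\cdots$ contains every finite binary word as a (consecutive) subword.
   Context: Let $X=\{x_i: i\in\mathbb Z\}$, $X^{-1}=\{x_i^{-1}\}$, $Y=\{y_i\}$, $Y^{-1}=\{y_i^{-1}\}$ be formal labels, and $\varepsilon$ a further label; write $w_1\sim w_2$ if both lie in $X\cup X^{-1}$ or both lie in $Y\cup Y^{-1}$. A two-stack automaton is a finite directed graph $\Gamma$ with vertices $v_1,\dots,v_m$, each vertex $v$ labelled by $\rho(v)\in X\cup X^{-1}\cup Y\cup Y^{-1}\cup\{\varepsilon\}$, such that $\rho(v_1)=\rho(v_2)=\varepsilon$ and there is no edge $v_i\to v_j$ with $\rho(v_i)\sim\rho(v_j)$. A path $\gamma=\gamma_1\cdots\gamma_n$ is a sequence of vertices joined by edges; its length is $n$. Traversing $\gamma$, keep two words $w_X\in X^*$, $w_Y\in Y^*$, initially empty; entering a vertex labelled $x_i$ appends $x_i$ to $w_X$, labelled $x_i^{-1}$ removes $x_i$ from the end of $w_X$ (similarly for $Y$ and $w_Y$), and labelled $\varepsilon$ does nothing. The path is balanced if every step is well defined and both words are empty at the end. $G(\Gamma,n)$ denotes the number of balanced paths of length $n$ from $v_1$ to $v_2$. *)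

theory Defs
  imports Main
begin

datatype label = X int | Xinv int | Y int | Yinv int | Eps

definition is_xlabel :: "label \<Rightarrow> bool" where
  "is_xlabel l \<longleftrightarrow> (\<exists>i. l = X i \<or> l = Xinv i)"

definition is_ylabel :: "label \<Rightarrow> bool" where
  "is_ylabel l \<longleftrightarrow> (\<exists>i. l = Y i \<or> l = Yinv i)"

definition sim_label :: "label \<Rightarrow> label \<Rightarrow> bool" where
  "sim_label a b \<longleftrightarrow> (is_xlabel a \<and> is_xlabel b) \<or> (is_ylabel a \<and> is_ylabel b)"

definition two_stack_automaton :: "nat \<Rightarrow> (nat \<Rightarrow> label) \<Rightarrow> (nat \<times> nat) set \<Rightarrow> bool" where
  "two_stack_automaton m rho E \<longleftrightarrow>
     2 \<le> m \<and> E \<subseteq> {1..m} \<times> {1..m} \<and> rho 1 = Eps \<and> rho 2 = Eps \<and>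
     (\<forall>(u, v) \<in> E. \<not> sim_label (rho u) (rho v))"

text \<open>Effect of entering a vertex with the given label on the pair of words (w_X, w_Y)
  (words stored as lists of indices); None means the step is not well defined.\<close>
fun step :: "label \<Rightarrow> (int list \<times> int list) option \<Rightarrow> (int list \<times> int list) option" where
  "step _ None = None"
| "step (X i) (Some (wx, wy)) = Some (wx @ [i], wy)"
| "step (Xinv i) (Some (wx, wy)) =
     (if wx \<noteq> [] \<and> last wx = i then Some (butlast wx, wy) else None)"
| "step (Y i) (Some (wx, wy)) = Some (wx, wy @ [i])"
| "step (Yinv i) (Some (wx, wy)) =
     (if wy \<noteq> [] \<and> last wy = i then Some (wx, butlast wy) else None)"
| "step Eps s = s"

definition run :: "(nat \<Rightarrow> label) \<Rightarrow> nat list \<Rightarrow> (int list \<times> int list) option" where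
  "run rho \<gamma> = fold (\<lambda>v s. step (rho v) s) \<gamma> (Some ([], []))"

definition balanced :: "(nat \<Rightarrow> label) \<Rightarrow> nat list \<Rightarrow> bool" where
  "balanced rho \<gamma> \<longleftrightarrow> run rho \<gamma> = Some ([], [])"

text \<open>A path is a nonempty sequence of vertices consecutive ones joined by edges;
  its length is the number of vertices.\<close>
definition is_path :: "nat \<Rightarrow> (nat \<times> nat) set \<Rightarrow> nat list \<Rightarrow> bool" where
  "is_path m E \<gamma> \<longleftrightarrow> \<gamma> \<noteq> [] \<and> set \<gamma> \<subseteq> {1..m} \<and>
     (\<forall>k. Suc k < length \<gamma> \<longrightarrow> (\<gamma> ! k, \<gamma> ! Suc k) \<in> E)"

definition G :: "nat \<Rightarrow> (nat \<Rightarrow> label) \<Rightarrow> (nat \<times> nat) set \<Rightarrow> nat \<Rightarrow> nat" where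
  "G m rho E n = card {\<gamma>. is_path m E \<gamma> \<and> length \<gamma> = n \<and> hd \<gamma> = 1 \<and> last \<gamma> = 2
                          \<and> balanced rho \<gamma>}"

end

theory Submission
  imports Defs
begin

text \<open>
  The automaton \<open>\<Gamma>\<^sub>1\<close> keeps a counter \<open>c \<ge> 1\<close> in unary on the \<open>x\<close>-stack, above a mode marker
  \<open>1\<close> or \<open>2\<close> at its bottom; the \<open>y\<close>-stack, with marker \<open>1\<close>, is scratch space.  One round
  moves the counter to the \<open>y\<close>-stack doubled, possibly adds one, and moves it back, so an
  accepting path spells out a number \<open>V\<close> in binary, one bit per round, starting from
  \<open>V = 1\<close>.  Paths start in mode 1, switch to mode 2 in exactly one round that appends a
  1-bit, and can only be accepted in mode 2, by draining the counter.  The rounds spent in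
  mode 1 are one step longer than the others, so the length of the accepting path for
  \<open>V\<close> with \<open>l\<close> appended bits, switched at the \<open>j\<close>-th of them, is
  \<open>Q V l + j\<close> up to a constant, where \<open>Q V l = 2V\<^sup>2 + 14V + 6l + 3\<close>.  As \<open>Q\<close> grows
  quadratically in \<open>V\<close> while \<open>j \<le> l \<le> log\<^sub>2 V\<close>, the triple \<open>(V, l, j)\<close> is determined by
  the length: every \<open>G(\<Gamma>\<^sub>1, n)\<close> is 0 or 1, and along the lengths \<open>Q V l + j\<close>,
  \<open>j < l\<close>, the sequence reads off the bits of \<open>V\<close> below its leading one.
\<close>

section \<open>Accepting tails of automata given by successor lists\<close>

lemma is_path_Cons_Cons:
  "is_path m E (v # w # q) \<longleftrightarrow> (v, w) \<in> E \<and> v \<in> {1..m} \<and> is_path m E (w # q)"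
  unfolding is_path_def by (auto simp: less_Suc_eq_0_disj)

locale successor_lists =
  fixes m :: nat and rho :: "nat \<Rightarrow> label" and succ :: "nat \<Rightarrow> nat list"
begin

definition edges :: "(nat \<times> nat) set" where
  "edges = {(v, w). v \<in> {1..m} \<and> w \<in> set (succ v)}"

lemma two_stack_automatonI:
  assumes "2 \<le> m" "rho 1 = Eps" "rho 2 = Eps"
    and "\<And>v w. v \<in> {1..m} \<Longrightarrow> w \<in> set (succ v) \<Longrightarrow> w \<in> {1..m} \<and>
        \<not> sim_label (rho v) (rho w)"
  shows "two_stack_automaton m rho edges"
proof -
  have "edges \<subseteq> {1..m} \<times> {1..m}" using assms(4) unfolding edges_def by blast
  moreover have "\<forall>(u, v) \<in> edges. \<not> sim_label (rho u) (rho v)" using assms(4) unfolding edges_def by blast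
  ultimately show ?thesis using assms(1-3) unfolding two_stack_automaton_def by blast
qed

definition tails :: "nat \<Rightarrow> (int list \<times> int list) option \<Rightarrow> nat \<Rightarrow> nat list set" where
  "tails v s N = {q. is_path m edges (v # q) \<and> last (v # q) = 2 \<and>
     fold (\<lambda>w s. step (rho w) s) q s = Some ([], []) \<and> length q < N}"

text \<open>The cutoff \<open>N\<close> makes statements about the loops of an automaton provable by
  induction on \<open>N\<close>.\<close>
definition spectrum :: "nat \<Rightarrow> (int list \<times> int list) option \<Rightarrow> nat set \<Rightarrow> nat \<Rightarrow> bool" where
  "spectrum v s A N \<longleftrightarrow> inj_on length (tails v s N) \<and> length ` tails v s N = {n \<in> A. n < N}"

lemma fold_step_None: "fold (\<lambda>w s. step (rho w) s) q None = None"
  by (induction q) auto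

lemma tails_unfold:
  assumes "v \<in> {1..m}"
  shows "tails v s N = (if v = 2 \<and> s = Some ([], []) \<and> 0 < N then {[]} else {}) \<union>
           (\<Union>w\<in>set (succ v). Cons w ` tails w (step (rho w) s) (N - 1))" (is "?L = ?R")
proof (intro set_eqI iffI)
  fix q assume q: "q \<in> ?L"
  show "q \<in> ?R"
  proof (cases q)
    case (Cons w q')
    then have "w \<in> set (succ v)" "q' \<in> tails w (step (rho w) s) (N - 1)"
      using q by (auto simp: tails_def is_path_Cons_Cons edges_def)
    then show ?thesis using Cons by blast
  qed (use q in \<open>auto simp: tails_def\<close>)
next
  fix q assume q: "q \<in> ?R"
  show "q \<in> ?L"
  proof (cases q)
    case (Cons w q')
    then have "w \<in> set (succ v)" "q' \<in> tails w (step (rho w) s) (N - 1)"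
      using q by (auto split: if_splits)
    then show ?thesis using Cons assms by (auto simp: tails_def is_path_Cons_Cons edges_def)
  qed (use q assms in \<open>auto simp: tails_def is_path_def split: if_splits\<close>)
qed

lemma spectrum_0: "spectrum v s A 0"
  by (simp add: spectrum_def tails_def)

lemma spectrum_None: "spectrum v None {} N"
  by (simp add: spectrum_def tails_def fold_step_None)

lemma spectrum_set_cong: "spectrum v s A N \<Longrightarrow> A = B \<Longrightarrow> spectrum v s B N"
  by simp

lemma spectrum_final:
  assumes "2 \<le> m" "succ 2 = []"
  shows "spectrum 2 (Some ([], [])) {0} N"
proof -
  have "tails 2 (Some ([], [])) N = (if 0 < N then {[]} else {})"
    using assms by (subst tails_unfold) auto
  then show ?thesis by (auto simp: spectrum_def)
qed

lemma spectrum_branch: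
  assumes v: "v \<in> {1..m}" "v \<noteq> 2"
    and succ: "\<And>w. w \<in> set (succ v) \<Longrightarrow> spectrum w (step (rho w) s) (A w) (N - 1)"
    and disj: "\<And>w w'. w \<in> set (succ v) \<Longrightarrow> w' \<in> set (succ v) \<Longrightarrow>
        w \<noteq> w' \<Longrightarrow> A w \<inter> A w' = {}"
  shows "spectrum v s (\<Union>w\<in>set (succ v). Suc ` A w) N"
proof -
  have T: "tails v s N = (\<Union>w\<in>set (succ v). Cons w ` tails w (step (rho w) s) (N - 1))"
    using tails_unfold[OF v(1)] v(2) by simp
  have "inj_on length (tails v s N)"
  proof (rule inj_onI)
    fix q1 q2 assume q1: "q1 \<in> tails v s N" and q2: "q2 \<in> tails v s N" and l: "length q1 = length q2"
    obtain w1 r1 where w1: "w1 \<in> set (succ v)" "q1 = w1 # r1" "r1 \<in> tails w1 (step (rho w1) s) (N - 1)"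
      using q1 T by auto
    obtain w2 r2 where w2: "w2 \<in> set (succ v)" "q2 = w2 # r2" "r2 \<in> tails w2 (step (rho w2) s) (N - 1)"
      using q2 T by auto
    have lr: "length r1 = length r2" using l w1(2) w2(2) by simp
    have "length r1 \<in> A w1" "length r2 \<in> A w2"
      using succ[OF w1(1)] succ[OF w2(1)] w1(3) w2(3) unfolding spectrum_def by blast+
    then have "w1 = w2" using disj[OF w1(1) w2(1)] lr by auto
    then have "r1 = r2" using succ[OF w1(1)] w1(3) w2(3) lr unfolding spectrum_def inj_on_def by auto
    then show "q1 = q2" using w1(2) w2(2) \<open>w1 = w2\<close> by simp
  qed
  moreover have "length ` tails v s N = {n \<in> (\<Union>w\<in>set (succ v). Suc ` A w). n < N}"
  proof (intro set_eqI iffI)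
    fix n assume "n \<in> length ` tails v s N"
    then obtain w r where w: "w \<in> set (succ v)" "n = Suc (length r)" "r \<in> tails w (step (rho w) s) (N - 1)"
      using T by auto
    then have "length r \<in> {n \<in> A w. n < N - 1}" using succ[OF w(1)] unfolding spectrum_def by blast
    then show "n \<in> {n \<in> (\<Union>w\<in>set (succ v). Suc ` A w). n < N}" using w by auto
  next
    fix n assume "n \<in> {n \<in> (\<Union>w\<in>set (succ v). Suc ` A w). n < N}"
    then obtain w k where w: "w \<in> set (succ v)" "k \<in> A w" "n = Suc k" "Suc k < N" by auto
    then have "k \<in> length ` tails w (step (rho w) s) (N - 1)"
      using succ[OF w(1)] unfolding spectrum_def by auto
    then obtain r where "r \<in> tails w (step (rho w) s) (N - 1)" "length r = k" by auto
    then show "n \<in> length ` tails v s N" using T w by force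
  qed
  ultimately show ?thesis unfolding spectrum_def by blast
qed

lemma spectrum_1:
  assumes "spectrum w s' A N'" "succ v = [w]" "v \<in> {1..m}" "v \<noteq> 2" "step (rho w) s = s'" "N' = N - 1"
  shows "spectrum v s (Suc ` A) N"
  using spectrum_branch[of v s "\<lambda>_. A" N] assms by simp

lemma spectrum_2:
  assumes "v \<in> {1..m}" "v \<noteq> 2" "succ v = [w1, w2]" "w1 \<noteq> w2"
    "spectrum w1 (step (rho w1) s) A1 (N - 1)" "spectrum w2 (step (rho w2) s) A2 (N - 1)" "A1 \<inter> A2 = {}"
  shows "spectrum v s (Suc ` A1 \<union> Suc ` A2) N"
proof -
  have "spectrum v s (\<Union>w\<in>set (succ v). Suc ` (if w = w1 then A1 else A2)) N"
    by (rule spectrum_branch) (use assms in \<open>auto simp: Int_commute\<close>)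
  then show ?thesis using assms(3,4) by (auto elim!: spectrum_set_cong)
qed

lemma spectrum_3:
  assumes "v \<in> {1..m}" "v \<noteq> 2" "succ v = [w1, w2, w3]" "distinct [w1, w2, w3]"
    "spectrum w1 (step (rho w1) s) A1 (N - 1)" "spectrum w2 (step (rho w2) s) A2 (N - 1)"
    "spectrum w3 (step (rho w3) s) A3 (N - 1)"
    "A1 \<inter> A2 = {}" "A1 \<inter> A3 = {}" "A2 \<inter> A3 = {}"
  shows "spectrum v s (Suc ` A1 \<union> Suc ` A2 \<union> Suc ` A3) N"
proof -
  have "spectrum v s (\<Union>w\<in>set (succ v). Suc ` (if w = w1 then A1 else if w = w2 then A2 else A3)) N"
    by (rule spectrum_branch) (use assms in \<open>auto simp: Int_commute\<close>)
  then show ?thesis using assms(3,4) by (auto elim!: spectrum_set_cong)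
qed

lemma spectrum_4:
  assumes "v \<in> {1..m}" "v \<noteq> 2" "succ v = [w1, w2, w3, w4]" "distinct [w1, w2, w3, w4]"
    "spectrum w1 (step (rho w1) s) A1 (N - 1)" "spectrum w2 (step (rho w2) s) A2 (N - 1)"
    "spectrum w3 (step (rho w3) s) A3 (N - 1)" "spectrum w4 (step (rho w4) s) A4 (N - 1)"
    "A1 \<inter> A2 = {}" "A1 \<inter> A3 = {}" "A1 \<inter> A4 = {}"
    "A2 \<inter> A3 = {}" "A2 \<inter> A4 = {}" "A3 \<inter> A4 = {}"
  shows "spectrum v s (Suc ` A1 \<union> Suc ` A2 \<union> Suc ` A3 \<union> Suc ` A4) N"
proof -
  have "spectrum v s (\<Union>w\<in>set (succ v).
      Suc ` (if w = w1 then A1 else if w = w2 then A2 else if w = w3 then A3 else A4)) N"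
    by (rule spectrum_branch) (use assms in \<open>auto simp: Int_commute\<close>)
  then show ?thesis using assms(3,4) by (auto elim!: spectrum_set_cong)
qed

text \<open>The path \<open>1 # q\<close> has length \<open>length q + 1\<close>, whence the shift by one.\<close>
lemma G_eq_indicator:
  assumes "rho 1 = Eps" "\<And>N. spectrum 1 (Some ([], [])) A N"
  shows "G m rho edges n = (if 1 \<le> n \<and> n - 1 \<in> A then 1 else 0)"
proof -
  let ?T = "tails 1 (Some ([], [])) (Suc n)"
  let ?S = "{q \<in> ?T. Suc (length q) = n}"
  have inj: "inj_on length ?T" and len: "length ` ?T = {k \<in> A. k < Suc n}"
    using assms(2) unfolding spectrum_def by auto
  have paths: "{\<gamma>. is_path m edges \<gamma> \<and> length \<gamma> = n \<and> hd \<gamma> = 1 \<and>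
      last \<gamma> = 2 \<and> balanced rho \<gamma>}
      = Cons 1 ` ?S"
  proof (intro set_eqI iffI)
    fix \<gamma> assume \<gamma>: "\<gamma> \<in> {\<gamma>. is_path m edges \<gamma> \<and>
        length \<gamma> = n \<and> hd \<gamma> = 1 \<and> last \<gamma> = 2 \<and> balanced rho \<gamma>}"
    then obtain q where q: "\<gamma> = 1 # q" by (cases \<gamma>) (auto simp: is_path_def)
    have "q \<in> ?T" "Suc (length q) = n"
      using \<gamma> q assms(1) by (auto simp: tails_def balanced_def run_def)
    then show "\<gamma> \<in> Cons 1 ` ?S" using q by blast
  next
    fix \<gamma> assume "\<gamma> \<in> Cons 1 ` ?S"
    then obtain q where "\<gamma> = 1 # q" "q \<in> ?T" "Suc (length q) = n" by blast
    then show "\<gamma> \<in> {\<gamma>. is_path m edges \<gamma> \<and> length \<gamma> = n \<and>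
        hd \<gamma> = 1 \<and> last \<gamma> = 2 \<and> balanced rho \<gamma>}"
      using assms(1) by (auto simp: tails_def balanced_def run_def)
  qed
  have "inj_on length ?S" by (rule inj_on_subset[OF inj]) auto
  then have "card ?S = card (length ` ?S)" by (simp add: card_image)
  also have "length ` ?S = {k \<in> length ` ?T. Suc k = n}" by auto
  also have "\<dots> = (if 1 \<le> n \<and> n - 1 \<in> A then {n - 1} else {})"
    unfolding len by (cases n) auto
  finally have card_S: "card ?S = (if 1 \<le> n \<and> n - 1 \<in> A then 1 else 0)" by simp
  have "G m rho edges n = card (Cons 1 ` ?S)" unfolding G_def paths ..
  also have "\<dots> = card ?S" by (rule card_image) (simp add: inj_on_def)
  finally show ?thesis using card_S by simp
qed

end

section \<open>Arithmetic of path lengths\<close>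

lemma shift_disjoint:
  fixes a b k :: nat
  assumes "(+) a ` A \<inter> (+) b ` B = {}" "k \<le> a" "k \<le> b"
  shows "(+) (a - k) ` A \<inter> (+) (b - k) ` B = {}"
proof (rule ccontr)
  assume "(+) (a - k) ` A \<inter> (+) (b - k) ` B \<noteq> {}"
  then obtain x y where "x \<in> A" "y \<in> B" "a - k + x = b - k + y" by auto
  then have "a + x = b + y" "x \<in> A" "y \<in> B" using assms(2,3) by arith+
  then show False using assms(1) by (metis IntI empty_iff image_eqI)
qed

text \<open>Up to a constant, \<open>path_cost V l\<close> is the length of an accepting path of \<open>\<Gamma>\<^sub>1\<close> that
  spells \<open>V\<close> with \<open>l\<close> bits below the leading one and spends no round in mode 1.\<close>
definition path_cost :: "nat \<Rightarrow> nat \<Rightarrow> nat" where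
  "path_cost V l = 2*V*V + 14*V + 6*l + 3"

text \<open>The lengths of the accepting tails from the end of a round with counter \<open>c\<close>, in mode 2
  and in mode 1, shifted by \<open>8 c\<close>: \<open>V\<close> ranges over the extensions of \<open>c\<close> by \<open>l\<close> bits, and in mode 1
  the mode switches in the round appending bit \<open>j\<close> of the extension, which must be 1.\<close>
definition mode2_lengths :: "nat \<Rightarrow> nat set" where
  "mode2_lengths c = {n. \<exists>V l. V div 2^l = c \<and> n + 8*c = path_cost V l}"

definition mode1_lengths :: "nat \<Rightarrow> nat set" where
  "mode1_lengths c = {n. \<exists>V l j. V div 2^l = c \<and> j < l \<and> odd (V div 2^(l - Suc j)) \<and>
     n + 8*c = path_cost V l + j}"

lemma linear_less_pow2: "7 * l < 4 * 2^l + (16::nat)"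
proof -
  have "7 * l + 9 \<le> 4 * 2^l + (16::nat)"
  proof (induction l)
    case (Suc l)
    have "l = 0 \<or> (2::nat) \<le> 2^l"
      by (metis One_nat_def Suc_leI neq0_conv one_less_power power_one_right self_le_power zero_less_numeral)
    then show ?case using Suc by auto
  qed simp
  then show ?thesis by simp
qed

lemma pow2_le_of_div_pos: "V div 2^l = c \<Longrightarrow> 0 < c \<Longrightarrow> 2^l \<le> (V::nat)"
  by (metis div_greater_zero_iff)

lemma path_cost_less: assumes "2^l \<le> V" "j \<le> l" "V < V'" shows "path_cost V l + j < path_cost V' l' + j'"
proof -
  have a: "7*l < 4*V + 16" using linear_less_pow2[of l] assms(1) by linarith
  have b: "(V+1)*(V+1) \<le> V'*V'" using assms(3) mult_le_mono[of "V+1" V' "V+1" V'] by simp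
  have "path_cost V l + j \<le> 2*V*V + 14*V + 7*l + 3" unfolding path_cost_def using assms(2) by simp
  also have "\<dots> < 2*(V+1)*(V+1) + 14*(V+1) + 3" using a by (simp add: algebra_simps)
  also have "\<dots> \<le> 2*V'*V' + 14*V' + 3" using b assms(3) by (simp add: algebra_simps)
  also have "\<dots> \<le> path_cost V' l' + j'" unfolding path_cost_def by simp
  finally show ?thesis .
qed

lemma div_pow2_diff: "(V::nat) div 2^l' = V div 2^l div 2^(l' - l)" if "l \<le> l'"
proof -
  have "(2::nat)^l' = 2^l * 2^(l'-l)" using that by (simp add: power_add[symmetric])
  then show ?thesis by (simp add: div_mult2_eq)
qed

lemma div_pow2_eq_imp_eq:
  assumes "(V::nat) div 2^l = c" "V div 2^l' = c" "0 < c" shows "l = l'"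
proof (rule ccontr)
  assume ne: "l \<noteq> l'"
  have gen: "\<And>a b. a < b \<Longrightarrow> V div 2^a = c \<Longrightarrow> V div 2^b = c \<Longrightarrow> False"
  proof -
    fix a b assume ab: "a < b" "V div 2^a = c" "V div 2^b = c"
    have "V div 2^b = c div 2^(b - a)" using div_pow2_diff[of a b V] ab by simp
    also have "\<dots> < c"
    proof (rule div_less_dividend)
      show "1 < (2::nat) ^ (b - a)" using ab(1) one_less_power[of "2::nat" "b - a"] by simp
    qed (use assms(3) in simp)
    finally show False using ab by simp
  qed
  show False using ne assms gen by (metis linorder_neqE_nat)
qed

lemma path_cost_inj:
  assumes "0 < c" "V div 2^l = c" "V' div 2^l' = c" "j \<le> l" "j' \<le> l'" "path_cost V l + j = path_cost V' l' + j'"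
  shows "V = V' \<and> l = l' \<and> j = j'"
proof -
  have "V = V'"
  proof (rule ccontr)
    assume "V \<noteq> V'"
    then consider "V < V'" | "V' < V" by linarith
    then show False
    proof cases
      case 1 then show ?thesis using path_cost_less[of l V j V' l' j'] assms pow2_le_of_div_pos by fastforce
    next
      case 2 then show ?thesis using path_cost_less[of l' V' j' V l j] assms pow2_le_of_div_pos by fastforce
    qed
  qed
  moreover have "l = l'" using div_pow2_eq_imp_eq assms \<open>V = V'\<close> by blast
  moreover have "j = j'" using assms(6) \<open>V = V'\<close> \<open>l = l'\<close> by simp
  ultimately show ?thesis by simp
qed

lemma path_cost_Suc: "path_cost V (Suc l) = path_cost V l + 6" by (simp add: path_cost_def)

lemma div_double_pow2: "(V::nat) div (2 * 2^l) = V div 2^l div 2"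
  by (metis div_mult2_eq mult.commute)

lemma path_cost_ge: "8 * (V div 2^l) \<le> path_cost V l'"
  using div_le_dividend[of V "2^l"] unfolding path_cost_def by linarith

lemma mem_shift_mode2_lengths:
   "n \<in> (+) k ` mode2_lengths d \<longleftrightarrow> (\<exists>V l. V div 2^l = d \<and> n + 8*d = path_cost V l + k)"
proof
  assume "n \<in> (+) k ` mode2_lengths d"
  then obtain m V l where "n = k + m" "V div 2^l = d" "m + 8*d = path_cost V l" by (auto simp: mode2_lengths_def)
  then show "\<exists>V l. V div 2^l = d \<and> n + 8*d = path_cost V l + k" by auto
next
  assume "\<exists>V l. V div 2^l = d \<and> n + 8*d = path_cost V l + k"
  then obtain V l where h: "V div 2^l = d" "n + 8*d = path_cost V l + k" by auto
  have "8*d \<le> path_cost V l" using path_cost_ge[of V l l] h(1) by simp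
  then have "n - k \<in> mode2_lengths d" "n = k + (n - k)" using h by (auto simp: mode2_lengths_def)
  then show "n \<in> (+) k ` mode2_lengths d" by (metis image_eqI)
qed

lemma mem_shift_mode1_lengths:
   "n \<in> (+) k ` mode1_lengths d \<longleftrightarrow>
   (\<exists>V l j. V div 2^l = d \<and> j < l \<and> odd (V div 2^(l - Suc j)) \<and> n + 8*d = path_cost V l + j + k)"
proof
  assume "n \<in> (+) k ` mode1_lengths d"
  then obtain m V l j where "n = k + m" "V div 2^l = d" "j < l" "odd (V div 2^(l - Suc j))" "m + 8*d = path_cost V l + j"
    by (auto simp: mode1_lengths_def)
  then show "\<exists>V l j. V div 2^l = d \<and> j < l \<and> odd (V div 2^(l - Suc j)) \<and> n + 8*d = path_cost V l + j + k"
    by (intro exI[of _ V] exI[of _ l] exI[of _ j]) auto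
next
  assume "\<exists>V l j. V div 2^l = d \<and> j < l \<and> odd (V div 2^(l - Suc j)) \<and> n + 8*d = path_cost V l + j + k"
  then obtain V l j where h: "V div 2^l = d" "j < l" "odd (V div 2^(l - Suc j))" "n + 8*d = path_cost V l + j + k" by auto
  have "8*d \<le> path_cost V l" using path_cost_ge[of V l l] h(1) by simp
  then have "n - k \<in> mode1_lengths d" "n = k + (n - k)" using h unfolding mode1_lengths_def mem_Collect_eq by auto
  then show "n \<in> (+) k ` mode1_lengths d" by (metis image_eqI)
qed

lemma div2_eq_Suc_cases: "(d::nat) div 2 = Suc c \<Longrightarrow> d = Suc (Suc (2*c)) \<or> d = Suc (Suc (Suc (2*c)))"
  by presburger

text \<open>The recursion implemented by one round, which takes the counter from \<open>c + 1\<close> to \<open>2 c + 2\<close>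
  or \<open>2 c + 3\<close>; the singleton is the path that drains the counter right away.\<close>
lemma mode2_lengths_Suc: "mode2_lengths (Suc c) = (+) (8*c+14) ` mode2_lengths (Suc (Suc (2*c))) \<union>
    (+) (8*c+22) ` mode2_lengths (Suc (Suc (Suc (2*c)))) \<union> {2*c*c+10*c+11}"
proof (intro set_eqI iffI)
  fix n assume "n \<in> mode2_lengths (Suc c)"
  then obtain V l where h: "V div 2^l = Suc c" "n + 8*Suc c = path_cost V l" by (auto simp: mode2_lengths_def)
  show "n \<in> (+) (8*c+14) ` mode2_lengths (Suc (Suc (2*c))) \<union>
      (+) (8*c+22) ` mode2_lengths (Suc (Suc (Suc (2*c)))) \<union> {2*c*c+10*c+11}"
  proof (cases l)
    case 0
    then have "V = Suc c" using h by simp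
    then have "n = 2*c*c+10*c+11" using h 0 by (simp add: path_cost_def algebra_simps)
    then show ?thesis by simp
  next
    case (Suc l')
    let ?d = "V div 2^l'"
    have dd: "?d div 2 = Suc c" using h(1) Suc by (simp add: div_double_pow2)
    have e: "n + 8*c + 2 = path_cost V l'" using h(2) Suc by (simp add: path_cost_Suc)
    from div2_eq_Suc_cases[OF dd] show ?thesis
    proof
      assume "?d = Suc (Suc (2*c))"
      then have "n \<in> (+) (8*c+14) ` mode2_lengths (Suc (Suc (2*c)))" unfolding mem_shift_mode2_lengths
        using e by (intro exI[of _ V] exI[of _ l']) auto
      then show ?thesis by simp
    next
      assume "?d = Suc (Suc (Suc (2*c)))"
      then have "n \<in> (+) (8*c+22) ` mode2_lengths (Suc (Suc (Suc (2*c))))"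
        unfolding mem_shift_mode2_lengths using e by (intro exI[of _ V] exI[of _ l']) auto
      then show ?thesis by simp
    qed
  qed
next
  fix n assume "n \<in> (+) (8*c+14) ` mode2_lengths (Suc (Suc (2*c))) \<union>
      (+) (8*c+22) ` mode2_lengths (Suc (Suc (Suc (2*c)))) \<union> {2*c*c+10*c+11}"
  then consider "n \<in> (+) (8*c+14) ` mode2_lengths (Suc (Suc (2*c)))"
    | "n \<in> (+) (8*c+22) ` mode2_lengths (Suc (Suc (Suc (2*c))))" | "n = 2*c*c+10*c+11"
    by auto
  then show "n \<in> mode2_lengths (Suc c)"
  proof cases
    case 1
    then obtain V l where h: "V div 2^l = Suc (Suc (2*c))" "n + 8*Suc (Suc (2*c)) = path_cost V l + (8*c+14)"
      unfolding mem_shift_mode2_lengths by blast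
    have "V div 2^(Suc l) = Suc c" using h(1) by (simp add: div_double_pow2)
    moreover have "n + 8*Suc c = path_cost V (Suc l)" using h(2) by (simp add: path_cost_Suc)
    ultimately show ?thesis unfolding mode2_lengths_def by blast
  next
    case 2
    then obtain V l where h: "V div 2^l = Suc (Suc (Suc (2*c)))"
      "n + 8*Suc (Suc (Suc (2*c))) = path_cost V l + (8*c+22)" unfolding mem_shift_mode2_lengths by blast
    have "V div 2^(Suc l) = Suc c" using h(1) by (simp add: div_double_pow2)
    moreover have "n + 8*Suc c = path_cost V (Suc l)" using h(2) by (simp add: path_cost_Suc)
    ultimately show ?thesis unfolding mode2_lengths_def by blast
  next
    case 3
    have "Suc c div 2^0 = Suc c" by simp
    moreover have "n + 8*Suc c = path_cost (Suc c) 0" using 3 by (simp add: path_cost_def algebra_simps)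
    ultimately show ?thesis unfolding mode2_lengths_def by blast
  qed
qed

lemma mode1_lengths_Suc: "mode1_lengths (Suc c) = (+) (8*c+15) ` mode1_lengths (Suc (Suc (2*c))) \<union>
    (+) (8*c+23) ` mode1_lengths (Suc (Suc (Suc (2*c)))) \<union> (+) (8*c+22) ` mode2_lengths (Suc (Suc (Suc (2*c))))"
proof (intro set_eqI iffI)
  fix n assume "n \<in> mode1_lengths (Suc c)"
  then obtain V l j where h: "V div 2^l = Suc c" "j < l" "odd (V div 2^(l - Suc j))" "n + 8*Suc c = path_cost V l + j"
    by (auto simp: mode1_lengths_def)
  obtain l' where l': "l = Suc l'" using h(2) by (cases l) auto
  let ?d = "V div 2^l'"
  have dd: "?d div 2 = Suc c" using h(1) l' by (simp add: div_double_pow2)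
  show "n \<in> (+) (8*c+15) ` mode1_lengths (Suc (Suc (2*c))) \<union>
      (+) (8*c+23) ` mode1_lengths (Suc (Suc (Suc (2*c)))) \<union> (+) (8*c+22) ` mode2_lengths (Suc (Suc (Suc (2*c))))"
  proof (cases j)
    case 0
    have od: "odd ?d" using h(3) 0 l' by simp
    have "?d = Suc (Suc (Suc (2*c)))" using div2_eq_Suc_cases[OF dd] od by auto
    moreover have "n + 8*c + 2 = path_cost V l'" using h(4) 0 l' by (simp add: path_cost_Suc)
    ultimately have "n \<in> (+) (8*c+22) ` mode2_lengths (Suc (Suc (Suc (2*c))))" unfolding mem_shift_mode2_lengths
      by (intro exI[of _ V] exI[of _ l']) auto
    then show ?thesis by simp
  next
    case (Suc j')
    have j': "j' < l'" "odd (V div 2^(l' - Suc j'))" using h(2,3) Suc l' by auto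
    have e: "n + 8*c + 1 = path_cost V l' + j'" using h(4) Suc l' by (simp add: path_cost_Suc)
    from div2_eq_Suc_cases[OF dd] show ?thesis
    proof
      assume "?d = Suc (Suc (2*c))"
      then have "n \<in> (+) (8*c+15) ` mode1_lengths (Suc (Suc (2*c)))" unfolding mem_shift_mode1_lengths using e j'
        by (intro exI[of _ V] exI[of _ l'] exI[of _ j']) auto
      then show ?thesis by simp
    next
      assume "?d = Suc (Suc (Suc (2*c)))"
      then have "n \<in> (+) (8*c+23) ` mode1_lengths (Suc (Suc (Suc (2*c))))" unfolding mem_shift_mode1_lengths using e j'
        by (intro exI[of _ V] exI[of _ l'] exI[of _ j']) auto
      then show ?thesis by simp
    qed
  qed
next
  fix n assume "n \<in> (+) (8*c+15) ` mode1_lengths (Suc (Suc (2*c))) \<union>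
      (+) (8*c+23) ` mode1_lengths (Suc (Suc (Suc (2*c)))) \<union> (+) (8*c+22) ` mode2_lengths (Suc (Suc (Suc (2*c))))"
  then consider "n \<in> (+) (8*c+15) ` mode1_lengths (Suc (Suc (2*c)))"
    | "n \<in> (+) (8*c+23) ` mode1_lengths (Suc (Suc (Suc (2*c))))"
    | "n \<in> (+) (8*c+22) ` mode2_lengths (Suc (Suc (Suc (2*c))))" by auto
  then show "n \<in> mode1_lengths (Suc c)"
  proof cases
    case 1
    then obtain V l j where h: "V div 2^l = Suc (Suc (2*c))" "j < l" "odd (V div 2^(l - Suc j))"
      "n + 8*Suc (Suc (2*c)) = path_cost V l + j + (8*c+15)" unfolding mem_shift_mode1_lengths by blast
    have "V div 2^(Suc l) = Suc c" using h(1) by (simp add: div_double_pow2)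
    moreover have "n + 8*Suc c = path_cost V (Suc l) + Suc j" using h(4) by (simp add: path_cost_Suc)
    moreover have "odd (V div 2^(Suc l - Suc (Suc j)))" using h(3) by simp
    ultimately show ?thesis unfolding mode1_lengths_def mem_Collect_eq using h(2)
      by (intro exI[of _ V] exI[of _ "Suc l"] exI[of _ "Suc j"]) auto
  next
    case 2
    then obtain V l j where h: "V div 2^l = Suc (Suc (Suc (2*c)))" "j < l" "odd (V div 2^(l - Suc j))"
      "n + 8*Suc (Suc (Suc (2*c))) = path_cost V l + j + (8*c+23)" unfolding mem_shift_mode1_lengths by blast
    have "V div 2^(Suc l) = Suc c" using h(1) by (simp add: div_double_pow2)
    moreover have "n + 8*Suc c = path_cost V (Suc l) + Suc j" using h(4) by (simp add: path_cost_Suc)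
    moreover have "odd (V div 2^(Suc l - Suc (Suc j)))" using h(3) by simp
    ultimately show ?thesis unfolding mode1_lengths_def mem_Collect_eq using h(2)
      by (intro exI[of _ V] exI[of _ "Suc l"] exI[of _ "Suc j"]) auto
  next
    case 3
    then obtain V l where h: "V div 2^l = Suc (Suc (Suc (2*c)))" "n + 8*Suc (Suc (Suc (2*c))) = path_cost V l + (8*c+22)"
      unfolding mem_shift_mode2_lengths by blast
    have "V div 2^(Suc l) = Suc c" using h(1) by (simp add: div_double_pow2)
    moreover have "n + 8*Suc c = path_cost V (Suc l) + 0" using h(2) by (simp add: path_cost_Suc)
    moreover have "odd (V div 2^(Suc l - Suc 0))" using h(1) by simp
    ultimately show ?thesis unfolding mode1_lengths_def mem_Collect_eq
      by (intro exI[of _ V] exI[of _ "Suc l"] exI[of _ 0]) auto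
  qed
qed

lemma decode_shifted_lengths:
  "n \<in> (+) (8*c+14) ` mode2_lengths (Suc (Suc (2*c))) \<Longrightarrow>
     \<exists>V l. V div 2^Suc l = Suc c \<and> V div 2^l = Suc (Suc (2*c)) \<and> n + 8*Suc c = path_cost V (Suc l)"
  "n \<in> (+) (8*c+22) ` mode2_lengths (Suc (Suc (Suc (2*c)))) \<Longrightarrow>
     \<exists>V l. V div 2^Suc l = Suc c \<and> V div 2^l = Suc (Suc (Suc (2*c))) \<and> n + 8*Suc c = path_cost V (Suc l)"
  "n \<in> (+) (8*c+15) ` mode1_lengths (Suc (Suc (2*c))) \<Longrightarrow>
     \<exists>V l j. j < l \<and> V div 2^Suc l = Suc c \<and> V div 2^l = Suc (Suc (2*c)) \<and>
       n + 8*Suc c = path_cost V (Suc l) + Suc j"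
  "n \<in> (+) (8*c+23) ` mode1_lengths (Suc (Suc (Suc (2*c)))) \<Longrightarrow>
     \<exists>V l j. j < l \<and> V div 2^Suc l = Suc c \<and> V div 2^l = Suc (Suc (Suc (2*c))) \<and>
       n + 8*Suc c = path_cost V (Suc l) + Suc j"
  unfolding mem_shift_mode2_lengths mem_shift_mode1_lengths
     apply (elim exE conjE)
  subgoal for V l by (intro exI[of _ V] exI[of _ l]) (simp add: div_double_pow2 path_cost_Suc)
    apply (elim exE conjE)
  subgoal for V l by (intro exI[of _ V] exI[of _ l]) (simp add: div_double_pow2 path_cost_Suc)
   apply (elim exE conjE)
  subgoal for V l j by (intro exI[of _ V] exI[of _ l] exI[of _ j]) (simp add: div_double_pow2 path_cost_Suc)
  apply (elim exE conjE)
  subgoal for V l j by (intro exI[of _ V] exI[of _ l] exI[of _ j]) (simp add: div_double_pow2 path_cost_Suc)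
  done

lemma mode2_branches_disjoint:
  "(+) (8*c+14) ` mode2_lengths (Suc (Suc (2*c))) \<inter> (+) (8*c+22) ` mode2_lengths (Suc (Suc (Suc (2*c)))) = {}"
          "(+) (8*c+14) ` mode2_lengths (Suc (Suc (2*c))) \<inter> {2*c*c+10*c+11} = {}"
          "(+) (8*c+22) ` mode2_lengths (Suc (Suc (Suc (2*c)))) \<inter> {2*c*c+10*c+11} = {}"
proof -
  show "(+) (8*c+14) ` mode2_lengths (Suc (Suc (2*c))) \<inter> (+) (8*c+22) ` mode2_lengths (Suc (Suc (Suc (2*c)))) = {}"
  proof (rule ccontr)
    assume "\<not> ?thesis"
    then obtain n where "n \<in> (+) (8*c+14) ` mode2_lengths (Suc (Suc (2*c)))"
      "n \<in> (+) (8*c+22) ` mode2_lengths (Suc (Suc (Suc (2*c))))" by blast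
    then obtain V l V' l' where a: "V div 2^Suc l = Suc c" "V div 2^l = Suc (Suc (2*c))" "n + 8*Suc c = path_cost V (Suc l)"
      and b: "V' div 2^Suc l' = Suc c" "V' div 2^l' = Suc (Suc (Suc (2*c)))" "n + 8*Suc c = path_cost V' (Suc l')"
      using decode_shifted_lengths(1,2) by metis
    have "V = V' \<and> Suc l = Suc l'" using path_cost_inj[of "Suc c" V "Suc l" V' "Suc l'" 0 0] a b by simp
    then show False using a b by simp
  qed
  show "(+) (8*c+14) ` mode2_lengths (Suc (Suc (2*c))) \<inter> {2*c*c+10*c+11} = {}"
  proof (rule ccontr)
    assume "\<not> ?thesis"
    then obtain n where n: "n \<in> (+) (8*c+14) ` mode2_lengths (Suc (Suc (2*c)))" "n = 2*c*c+10*c+11" by blast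
    then obtain V l where a: "V div 2^Suc l = Suc c" "n + 8*Suc c = path_cost V (Suc l)"
      using decode_shifted_lengths(1) by metis
    have b: "n + 8*Suc c = path_cost (Suc c) 0 + 0" using n(2) by (simp add: path_cost_def algebra_simps)
    have "Suc l = 0" using path_cost_inj[of "Suc c" V "Suc l" "Suc c" 0 0 0] a b by simp
    then show False by simp
  qed
  show "(+) (8*c+22) ` mode2_lengths (Suc (Suc (Suc (2*c)))) \<inter> {2*c*c+10*c+11} = {}"
  proof (rule ccontr)
    assume "\<not> ?thesis"
    then obtain n where n: "n \<in> (+) (8*c+22) ` mode2_lengths (Suc (Suc (Suc (2*c))))" "n = 2*c*c+10*c+11" by blast
    then obtain V l where a: "V div 2^Suc l = Suc c" "n + 8*Suc c = path_cost V (Suc l)"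
      using decode_shifted_lengths(2) by metis
    have b: "n + 8*Suc c = path_cost (Suc c) 0 + 0" using n(2) by (simp add: path_cost_def algebra_simps)
    have "Suc l = 0" using path_cost_inj[of "Suc c" V "Suc l" "Suc c" 0 0 0] a b by simp
    then show False by simp
  qed
qed

lemma mode1_branches_disjoint:
  "(+) (8*c+15) ` mode1_lengths (Suc (Suc (2*c))) \<inter> (+) (8*c+23) ` mode1_lengths (Suc (Suc (Suc (2*c)))) = {}"
          "(+) (8*c+15) ` mode1_lengths (Suc (Suc (2*c))) \<inter> (+) (8*c+22) ` mode2_lengths (Suc (Suc (Suc (2*c)))) = {}"
          "(+) (8*c+23) ` mode1_lengths (Suc (Suc (Suc (2*c)))) \<inter>
              (+) (8*c+22) ` mode2_lengths (Suc (Suc (Suc (2*c)))) = {}"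
proof -
  show "(+) (8*c+15) ` mode1_lengths (Suc (Suc (2*c))) \<inter> (+) (8*c+23) ` mode1_lengths (Suc (Suc (Suc (2*c)))) = {}"
  proof (rule ccontr)
    assume "\<not> ?thesis"
    then obtain n where "n \<in> (+) (8*c+15) ` mode1_lengths (Suc (Suc (2*c)))"
      "n \<in> (+) (8*c+23) ` mode1_lengths (Suc (Suc (Suc (2*c))))" by blast
    then obtain V l j V' l' j' where a: "j < l" "V div 2^Suc l = Suc c" "V div 2^l = Suc (Suc (2*c))"
      "n + 8*Suc c = path_cost V (Suc l) + Suc j"
      and b: "j' < l'" "V' div 2^Suc l' = Suc c" "V' div 2^l' = Suc (Suc (Suc (2*c)))"
        "n + 8*Suc c = path_cost V' (Suc l') + Suc j'"
      using decode_shifted_lengths(3,4) by metis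
    have "V = V' \<and> Suc l = Suc l'" using path_cost_inj[of "Suc c" V "Suc l" V' "Suc l'" "Suc j" "Suc j'"] a b by simp
    then show False using a b by simp
  qed
  show "(+) (8*c+15) ` mode1_lengths (Suc (Suc (2*c))) \<inter> (+) (8*c+22) ` mode2_lengths (Suc (Suc (Suc (2*c)))) = {}"
  proof (rule ccontr)
    assume "\<not> ?thesis"
    then obtain n where "n \<in> (+) (8*c+15) ` mode1_lengths (Suc (Suc (2*c)))"
      "n \<in> (+) (8*c+22) ` mode2_lengths (Suc (Suc (Suc (2*c))))" by blast
    then obtain V l j V' l' where a: "j < l" "V div 2^Suc l = Suc c" "n + 8*Suc c = path_cost V (Suc l) + Suc j"
      and b: "V' div 2^Suc l' = Suc c" "n + 8*Suc c = path_cost V' (Suc l') + 0"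
      using decode_shifted_lengths(3,2) by (metis add_0_right)
    have "Suc j = 0" using path_cost_inj[of "Suc c" V "Suc l" V' "Suc l'" "Suc j" 0] a b by simp
    then show False by simp
  qed
  show "(+) (8*c+23) ` mode1_lengths (Suc (Suc (Suc (2*c)))) \<inter> (+) (8*c+22) ` mode2_lengths (Suc (Suc (Suc (2*c)))) = {}"
  proof (rule ccontr)
    assume "\<not> ?thesis"
    then obtain n where "n \<in> (+) (8*c+23) ` mode1_lengths (Suc (Suc (Suc (2*c))))"
      "n \<in> (+) (8*c+22) ` mode2_lengths (Suc (Suc (Suc (2*c))))" by blast
    then obtain V l j V' l' where a: "j < l" "V div 2^Suc l = Suc c" "n + 8*Suc c = path_cost V (Suc l) + Suc j"
      and b: "V' div 2^Suc l' = Suc c" "n + 8*Suc c = path_cost V' (Suc l') + 0"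
      using decode_shifted_lengths(4,2) by (metis add_0_right)
    have "Suc j = 0" using path_cost_inj[of "Suc c" V "Suc l" V' "Suc l'" "Suc j" 0] a b by simp
    then show False by simp
  qed
qed

section \<open>The automaton\<close>

lemma butlast_replicate_Suc: "butlast (replicate (Suc a) x) = replicate a x"
  by (metis butlast_snoc replicate_Suc replicate_append_same)

lemma butlast_Cons_replicate_Suc: "butlast (y # replicate (Suc a) x) = y # replicate a x"
  by (simp add: butlast_replicate_Suc del: replicate_Suc)

lemma replicate_snoc: "replicate a x @ [x] = replicate (Suc a) x"
  by (simp add: replicate_append_same)

lemma replicate_one: "replicate 1 x = [x]" "replicate (Suc 0) x = [x]"
  by simp_all

lemma replicate_two: "replicate 2 x = [x, x]"
  by (simp add: numeral_2_eq_2)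

lemma step_Xinv_replicate:
  "step (Xinv i) (Some (mx # replicate a 0, ys)) =
     (if 0 < a then (if i = 0 then Some (mx # replicate (a - 1) 0, ys) else None)
      else (if i = mx then Some ([], ys) else None))"
  by (cases a) (auto simp: butlast_Cons_replicate_Suc butlast_replicate_Suc simp del: replicate_Suc)

lemma step_Yinv_replicate:
  "step (Yinv i) (Some (xs, 1 # replicate b 0)) =
     (if 0 < b then (if i = 0 then Some (xs, 1 # replicate (b - 1) 0) else None)
      else (if i = 1 then Some (xs, []) else None))"
  by (cases b) (auto simp: butlast_Cons_replicate_Suc butlast_replicate_Suc simp del: replicate_Suc)

text \<open>Vertex \<open>v\<close> of \<open>\<Gamma>\<^sub>1\<close> is described by entry \<open>v\<close> of the two tables; entry 0 is unused.
  Vertices 1--6 set up the counter 1 in mode 1.  In a round, 7--10 move the counter to the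
  \<open>y\<close>-stack doubled; 11--14, 15--17 and 18--20 replace the mode marker 1 by 1, 1 by 2 and 2 by 2;
  21--26 add one; 27, 28 move the counter back and 29--31 end the round.  In mode 2, each pass
  through 32--43 decrements the counter, and 44, 45 pop both markers once it is 0.\<close>
definition Gamma1_labels :: "label list" where
  "Gamma1_labels =
    [Eps, Eps, Eps, X 1, Y 1, X 0, Eps, Xinv 0, Y 0, Eps,
     Y 0, Xinv 1, Eps, Eps, X 1, Xinv 1, Eps, X 2, Xinv 2, Eps,
     X 2, Y 0, Eps, Eps, Eps, Eps, Eps, Yinv 0, X 0, Yinv 1,
     Eps, Y 1, Xinv 0, Eps, Xinv 0, Y 0, Xinv 2, Eps, X 2, Yinv 0,
     X 0, Yinv 1, Eps, Y 1, Xinv 2, Yinv 1]"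

definition Gamma1_successors :: "nat list list" where
  "Gamma1_successors =
    [[], [3], [], [4], [5], [6], [7], [8], [9], [10], [7,11,15,18], [12],
     [13], [14], [21,27], [16], [17], [21], [19], [20], [21,27], [22], [23], [24],
     [25], [26], [27], [28], [27,29], [30], [31], [7,32,44], [33], [34,36], [35], [34,36],
     [37], [38], [39,41], [40], [39,41], [42], [43], [32,44], [45], [2]]"

definition rho1 :: "nat \<Rightarrow> label" where
  "rho1 v = (if v < 46 then Gamma1_labels ! v else Eps)"

definition succ1 :: "nat \<Rightarrow> nat list" where
  "succ1 v = (if v < 46 then Gamma1_successors ! v else [])"

interpretation Gamma1: successor_lists 45 rho1 succ1 .

lemma rho1_simps [simp]:
  "rho1 1 = Eps"
  "rho1 2 = Eps"
  "rho1 3 = X 1"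
  "rho1 4 = Y 1"
  "rho1 5 = X 0"
  "rho1 6 = Eps"
  "rho1 7 = Xinv 0"
  "rho1 8 = Y 0"
  "rho1 9 = Eps"
  "rho1 10 = Y 0"
  "rho1 11 = Xinv 1"
  "rho1 12 = Eps"
  "rho1 13 = Eps"
  "rho1 14 = X 1"
  "rho1 15 = Xinv 1"
  "rho1 16 = Eps"
  "rho1 17 = X 2"
  "rho1 18 = Xinv 2"
  "rho1 19 = Eps"
  "rho1 20 = X 2"
  "rho1 21 = Y 0"
  "rho1 22 = Eps"
  "rho1 23 = Eps"
  "rho1 24 = Eps"
  "rho1 25 = Eps"
  "rho1 26 = Eps"
  "rho1 27 = Yinv 0"
  "rho1 28 = X 0"
  "rho1 29 = Yinv 1"
  "rho1 30 = Eps"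
  "rho1 31 = Y 1"
  "rho1 32 = Xinv 0"
  "rho1 33 = Eps"
  "rho1 34 = Xinv 0"
  "rho1 35 = Y 0"
  "rho1 36 = Xinv 2"
  "rho1 37 = Eps"
  "rho1 38 = X 2"
  "rho1 39 = Yinv 0"
  "rho1 40 = X 0"
  "rho1 41 = Yinv 1"
  "rho1 42 = Eps"
  "rho1 43 = Y 1"
  "rho1 44 = Xinv 2"
  "rho1 45 = Yinv 1"
  by (simp_all add: rho1_def Gamma1_labels_def)

lemma succ1_simps [simp]:
  "succ1 1 = [3]"
  "succ1 2 = []"
  "succ1 3 = [4]"
  "succ1 4 = [5]"
  "succ1 5 = [6]"
  "succ1 6 = [7]"
  "succ1 7 = [8]"
  "succ1 8 = [9]"
  "succ1 9 = [10]"
  "succ1 10 = [7, 11, 15, 18]"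
  "succ1 11 = [12]"
  "succ1 12 = [13]"
  "succ1 13 = [14]"
  "succ1 14 = [21, 27]"
  "succ1 15 = [16]"
  "succ1 16 = [17]"
  "succ1 17 = [21]"
  "succ1 18 = [19]"
  "succ1 19 = [20]"
  "succ1 20 = [21, 27]"
  "succ1 21 = [22]"
  "succ1 22 = [23]"
  "succ1 23 = [24]"
  "succ1 24 = [25]"
  "succ1 25 = [26]"
  "succ1 26 = [27]"
  "succ1 27 = [28]"
  "succ1 28 = [27, 29]"
  "succ1 29 = [30]"
  "succ1 30 = [31]"
  "succ1 31 = [7, 32, 44]"
  "succ1 32 = [33]"
  "succ1 33 = [34, 36]"
  "succ1 34 = [35]"
  "succ1 35 = [34, 36]"
  "succ1 36 = [37]"
  "succ1 37 = [38]"
  "succ1 38 = [39, 41]"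
  "succ1 39 = [40]"
  "succ1 40 = [39, 41]"
  "succ1 41 = [42]"
  "succ1 42 = [43]"
  "succ1 43 = [32, 44]"
  "succ1 44 = [45]"
  "succ1 45 = [2]"
  by (simp_all add: succ1_def Gamma1_successors_def)

lemma Gamma1_two_stack_automaton: "two_stack_automaton 45 rho1 Gamma1.edges"
proof (rule Gamma1.two_stack_automatonI[OF _ rho1_simps(1,2)])
  have "\<forall>v \<in> set [1..<46]. \<forall>w \<in> set (succ1 v). w \<in> {1..45} \<and> \<not> sim_label (rho1 v) (rho1 w)"
    by (simp add: upt_rec succ1_def Gamma1_successors_def rho1_def Gamma1_labels_def sim_label_def
        is_xlabel_def is_ylabel_def)
  then show "\<And>v w. v \<in> {1..45} \<Longrightarrow> w \<in> set (succ1 v) \<Longrightarrow>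
      w \<in> {1..45} \<and> \<not> sim_label (rho1 v) (rho1 w)"
    by auto
qed simp_all

text \<open>Except for the final pops at 44 and 45, \<open>\<Gamma>\<^sub>1\<close> pops a marker only to push it
  back a few steps later.\<close>
abbreviation cfg :: "int \<Rightarrow> nat \<Rightarrow> nat \<Rightarrow> (int list \<times> int list) option" where
  "cfg mx a b \<equiv> Some (mx # replicate a 0, 1 # replicate b 0)"

lemmas cfg_simps = step_Xinv_replicate step_Yinv_replicate replicate_snoc butlast_replicate_Suc
  replicate_one Gamma1.spectrum_None

section \<open>Lengths of accepting tails\<close>

lemma doubling_loop: "mx \<noteq> 0 \<Longrightarrow>
    Gamma1.spectrum 10 (Some ([mx], 1 # replicate (b + 2*a) 0)) A (N - 4*a) \<Longrightarrow>
   Gamma1.spectrum 10 (cfg mx a b) ((+) (4*a) ` A) N"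
proof (induction a arbitrary: b N)
  case 0 then show ?case by simp
next
  case (Suc a)
  have h: "Gamma1.spectrum 10 (cfg mx a (Suc (Suc b))) ((+) (4*a) ` A) (N - 4)"
    using Suc.IH[of "Suc (Suc b)" "N - 4"] Suc.prems by (simp add: algebra_simps)
  have f9: "Gamma1.spectrum 9 (cfg mx a (Suc b)) (Suc ` (+) (4*a) ` A) (N - 3)"
    by (rule Gamma1.spectrum_1[OF h]) (simp_all add: cfg_simps del: replicate_Suc)
  have f8: "Gamma1.spectrum 8 (cfg mx a (Suc b)) (Suc ` Suc ` (+) (4*a) ` A) (N - 2)"
    by (rule Gamma1.spectrum_1[OF f9]) (simp_all add: cfg_simps del: replicate_Suc)
  have f7: "Gamma1.spectrum 7 (cfg mx a b) (Suc ` Suc ` Suc ` (+) (4*a) ` A) (N - 1)"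
    by (rule Gamma1.spectrum_1[OF f8]) (simp_all add: cfg_simps del: replicate_Suc)
  have "Gamma1.spectrum 10 (cfg mx (Suc a) b)
      (Suc ` Suc ` Suc ` Suc ` (+) (4*a) ` A \<union> Suc ` {} \<union> Suc ` {} \<union> Suc ` {}) N"
    by (rule Gamma1.spectrum_4) (simp add: cfg_simps f7[simplified One_nat_def] del: replicate_Suc)+
  then show ?case by (rule Gamma1.spectrum_set_cong) (auto simp: image_image)
qed

lemma refill_loop: "Gamma1.spectrum 31 (cfg mx (a+b) 0) A (N - (2*b+3)) \<Longrightarrow>
    Gamma1.spectrum 28 (cfg mx a b) ((+) (2*b+3) ` A) N"
proof (induction b arbitrary: a N)
  case 0
  have h: "Gamma1.spectrum 31 (cfg mx a 0) A (N - 3)" using 0 by simp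
  have f30: "Gamma1.spectrum 30 (Some (mx # replicate a 0, [])) (Suc ` A) (N - 2)"
    by (rule Gamma1.spectrum_1[OF h]) (simp_all add: cfg_simps del: replicate_Suc)
  have f29: "Gamma1.spectrum 29 (Some (mx # replicate a 0, [])) (Suc ` Suc ` A) (N - 1)"
    by (rule Gamma1.spectrum_1[OF f30]) (simp_all add: cfg_simps del: replicate_Suc)
  have "Gamma1.spectrum 28 (cfg mx a 0) (Suc ` {} \<union> Suc ` Suc ` Suc ` A) N"
    by (rule Gamma1.spectrum_2) (simp add: cfg_simps f29[simplified One_nat_def] del: replicate_Suc)+
  then show ?case by (rule Gamma1.spectrum_set_cong) (auto simp: image_image)
next
  case (Suc b)
  have h: "Gamma1.spectrum 28 (cfg mx (Suc a) b) ((+) (2*b+3) ` A) (N - 2)"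
    using Suc.IH[of "Suc a" "N - 2"] Suc.prems by (simp add: algebra_simps)
  have f27: "Gamma1.spectrum 27 (cfg mx a b) (Suc ` (+) (2*b+3) ` A) (N - 1)"
    by (rule Gamma1.spectrum_1[OF h]) (simp_all add: cfg_simps del: replicate_Suc)
  have "Gamma1.spectrum 28 (cfg mx a (Suc b)) (Suc ` Suc ` (+) (2*b+3) ` A \<union> Suc ` {}) N"
    by (rule Gamma1.spectrum_2) (simp add: cfg_simps f27[simplified One_nat_def] del: replicate_Suc)+
  then show ?case by (rule Gamma1.spectrum_set_cong) (auto simp: image_image)
qed

lemma drain_refill_loop: "v \<in> {38,40} \<Longrightarrow>
    Gamma1.spectrum 43 (cfg mx (a+b) 0) A (N - (2*b+3)) \<Longrightarrow> Gamma1.spectrum v (cfg mx a b) ((+) (2*b+3) ` A) N"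
proof (induction b arbitrary: a N v)
  case 0
  have h: "Gamma1.spectrum 43 (cfg mx a 0) A (N - 3)" using 0 by simp
  have f42: "Gamma1.spectrum 42 (Some (mx # replicate a 0, [])) (Suc ` A) (N - 2)"
    by (rule Gamma1.spectrum_1[OF h]) (simp_all add: cfg_simps del: replicate_Suc)
  have f41: "Gamma1.spectrum 41 (Some (mx # replicate a 0, [])) (Suc ` Suc ` A) (N - 1)"
    by (rule Gamma1.spectrum_1[OF f42]) (simp_all add: cfg_simps del: replicate_Suc)
  have sv: "succ1 v = [39,41]" "Suc 0 \<le> v" "v \<le> 45" "v \<noteq> 2" using 0 by auto
  have "Gamma1.spectrum v (cfg mx a 0) (Suc ` {} \<union> Suc ` Suc ` Suc ` A) N"
    by (rule Gamma1.spectrum_2) (simp add: sv cfg_simps f41[simplified One_nat_def] del: replicate_Suc)+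
  then show ?case by (rule Gamma1.spectrum_set_cong) (auto simp: image_image)
next
  case (Suc b)
  have h: "Gamma1.spectrum 40 (cfg mx (Suc a) b) ((+) (2*b+3) ` A) (N - 2)"
    using Suc.IH[of 40 "Suc a" "N - 2"] Suc.prems by (simp add: algebra_simps)
  have f39: "Gamma1.spectrum 39 (cfg mx a b) (Suc ` (+) (2*b+3) ` A) (N - 1)"
    by (rule Gamma1.spectrum_1[OF h]) (simp_all add: cfg_simps del: replicate_Suc)
  have sv: "succ1 v = [39,41]" "Suc 0 \<le> v" "v \<le> 45" "v \<noteq> 2" using Suc.prems by auto
  have "Gamma1.spectrum v (cfg mx a (Suc b)) (Suc ` Suc ` (+) (2*b+3) ` A \<union> Suc ` {}) N"
    by (rule Gamma1.spectrum_2) (simp add: sv cfg_simps f39[simplified One_nat_def] del: replicate_Suc)+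
  then show ?case by (rule Gamma1.spectrum_set_cong) (auto simp: image_image)
qed

lemma drain_transfer_loop: "v \<in> {33,35} \<Longrightarrow>
    Gamma1.spectrum 38 (cfg 2 0 (a+b)) A (N - (2*a+3)) \<Longrightarrow> Gamma1.spectrum v (cfg 2 a b) ((+) (2*a+3) ` A) N"
proof (induction a arbitrary: b N v)
  case 0
  have h: "Gamma1.spectrum 38 (cfg 2 0 b) A (N - 3)" using 0 by simp
  have f37: "Gamma1.spectrum 37 (Some ([], 1 # replicate b 0)) (Suc ` A) (N - 2)"
    by (rule Gamma1.spectrum_1[OF h]) (simp_all add: cfg_simps del: replicate_Suc)
  have f36: "Gamma1.spectrum 36 (Some ([], 1 # replicate b 0)) (Suc ` Suc ` A) (N - 1)"
    by (rule Gamma1.spectrum_1[OF f37]) (simp_all add: cfg_simps del: replicate_Suc)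
  have sv: "succ1 v = [34,36]" "Suc 0 \<le> v" "v \<le> 45" "v \<noteq> 2" using 0 by auto
  have "Gamma1.spectrum v (cfg 2 0 b) (Suc ` {} \<union> Suc ` Suc ` Suc ` A) N"
    by (rule Gamma1.spectrum_2) (insert f36, simp add: sv cfg_simps del: replicate_Suc)+
  then show ?case by (rule Gamma1.spectrum_set_cong) (auto simp: image_image)
next
  case (Suc a)
  have h: "Gamma1.spectrum 35 (cfg 2 a (Suc b)) ((+) (2*a+3) ` A) (N - 2)"
    using Suc.IH[of 35 "Suc b" "N - 2"] Suc.prems by (simp add: algebra_simps)
  have f34: "Gamma1.spectrum 34 (cfg 2 a b) (Suc ` (+) (2*a+3) ` A) (N - 1)"
    by (rule Gamma1.spectrum_1[OF h]) (simp_all add: cfg_simps del: replicate_Suc)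
  have sv: "succ1 v = [34,36]" "Suc 0 \<le> v" "v \<le> 45" "v \<noteq> 2" using Suc.prems by auto
  have "Gamma1.spectrum v (cfg 2 (Suc a) b) (Suc ` Suc ` (+) (2*a+3) ` A \<union> Suc ` {}) N"
    by (rule Gamma1.spectrum_2) (insert f34, simp add: sv cfg_simps del: replicate_Suc)+
  then show ?case by (rule Gamma1.spectrum_set_cong) (auto simp: image_image)
qed

lemma drain_transfer_loop_mode1: "v \<in> {33,35} \<Longrightarrow> Gamma1.spectrum v (cfg 1 a b) {} N"
proof (induction a arbitrary: b N v)
  case 0
  have sv: "succ1 v = [34,36]" "Suc 0 \<le> v" "v \<le> 45" "v \<noteq> 2" using 0 by auto
  have "Gamma1.spectrum v (cfg 1 0 b) (Suc ` {} \<union> Suc ` {}) N"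
    by (rule Gamma1.spectrum_2) (simp add: sv cfg_simps del: replicate_Suc)+
  then show ?case by simp
next
  case (Suc a)
  have h: "Gamma1.spectrum 35 (cfg 1 a (Suc b)) {} (N - 2)" using Suc.IH[of 35 "Suc b" "N - 2"] by (simp del: replicate_Suc)
  have f34: "Gamma1.spectrum 34 (cfg 1 a b) (Suc ` {}) (N - 1)"
    by (rule Gamma1.spectrum_1[OF h]) (simp_all add: cfg_simps del: replicate_Suc)
  have sv: "succ1 v = [34,36]" "Suc 0 \<le> v" "v \<le> 45" "v \<noteq> 2" using Suc.prems by auto
  have "Gamma1.spectrum v (cfg 1 (Suc a) b) (Suc ` Suc ` {} \<union> Suc ` {}) N"
    by (rule Gamma1.spectrum_2) (insert f34, simp add: sv cfg_simps del: replicate_Suc)+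
  then show ?case by simp
qed

lemma drain_pass: "Gamma1.spectrum 43 (cfg 2 r 0) A (N - (4*r+7)) \<Longrightarrow>
    Gamma1.spectrum 32 (cfg 2 r 0) ((+) (4*r+7) ` A) N"
proof -
  assume h: "Gamma1.spectrum 43 (cfg 2 r 0) A (N - (4*r+7))"
  have f38: "Gamma1.spectrum 38 (cfg 2 0 r) ((+) (2*r+3) ` A) (N - (2*r+4))"
    using drain_refill_loop[of 38 2 0 r A "N - (2*r+4)"] h by (simp add: algebra_simps)
  have f33: "Gamma1.spectrum 33 (cfg 2 r 0) ((+) (2*r+3) ` (+) (2*r+3) ` A) (N - 1)"
    using drain_transfer_loop[of 33 r 0 "(+) (2*r+3) ` A" "N - 1"] f38 by (simp add: algebra_simps)
  have "Gamma1.spectrum 32 (cfg 2 r 0) (Suc ` (+) (2*r+3) ` (+) (2*r+3) ` A) N"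
    by (rule Gamma1.spectrum_1[OF f33]) (simp_all add: cfg_simps del: replicate_Suc)
  then show ?thesis by (rule Gamma1.spectrum_set_cong) (auto simp: image_image)
qed

definition drain_length :: "nat \<Rightarrow> nat" where "drain_length r = 2*r*r + 6*r + 3"

lemma drain_spectrum: "Gamma1.spectrum 43 (cfg 2 r 0) {drain_length r} N"
proof (induction r arbitrary: N)
  case 0
  have f2: "Gamma1.spectrum 2 (Some ([],[])) {0} (N - 3)" by (rule Gamma1.spectrum_final) simp_all
  have f45: "Gamma1.spectrum 45 (Some ([],[])) (Suc ` {0}) (N - 2)"
    by (rule Gamma1.spectrum_1[OF f2]) (simp_all add: cfg_simps del: replicate_Suc)
  have f44: "Gamma1.spectrum 44 (Some ([],[1])) (Suc ` Suc ` {0}) (N - 1)"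
    by (rule Gamma1.spectrum_1[OF f45]) (simp_all add: cfg_simps del: replicate_Suc)
  have "Gamma1.spectrum 43 (cfg 2 0 0) (Suc ` {} \<union> Suc ` Suc ` Suc ` {0}) N"
    by (rule Gamma1.spectrum_2) (insert f44, simp add: cfg_simps del: replicate_Suc)+
  then show ?case by (rule Gamma1.spectrum_set_cong) (auto simp: drain_length_def)
next
  case (Suc r)
  have f32: "Gamma1.spectrum 32 (cfg 2 r 0) ((+) (4*r+7) ` {drain_length r}) (N - 1)"
    by (rule drain_pass) (rule Suc.IH)
  have "Gamma1.spectrum 43 (cfg 2 (Suc r) 0) (Suc ` (+) (4*r+7) ` {drain_length r} \<union> Suc ` {}) N"
    by (rule Gamma1.spectrum_2) (insert f32, simp add: cfg_simps del: replicate_Suc)+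
  then show ?case by (rule Gamma1.spectrum_set_cong) (auto simp: drain_length_def algebra_simps)
qed

lemma drain_mode1_dead: "Gamma1.spectrum 32 (cfg 1 r 0) {} N"
proof -
  have "Gamma1.spectrum 33 (cfg 1 r 0) {} (N - 1)" by (rule drain_transfer_loop_mode1) simp
  then have "Gamma1.spectrum 32 (cfg 1 r 0) (Suc ` {}) N"
    by (rule Gamma1.spectrum_1) (simp_all add: cfg_simps del: replicate_Suc)
  then show ?thesis by simp
qed

lemma bit1_tail: "Gamma1.spectrum 31 (cfg mx (Suc b) 0) A (N - (2*b+10)) \<Longrightarrow>
    Gamma1.spectrum 21 (cfg mx 0 (Suc b)) ((+) (2*b+10) ` A) N"
proof -
  assume h: "Gamma1.spectrum 31 (cfg mx (Suc b) 0) A (N - (2*b+10))"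
  have f28: "Gamma1.spectrum 28 (cfg mx 1 b) ((+) (2*b+3) ` A) (N - 7)"
    using refill_loop[of mx 1 b A "N - 7"] h by (simp add: algebra_simps)
  have f27: "Gamma1.spectrum 27 (cfg mx 0 b) (Suc ` (+) (2*b+3) ` A) (N - 6)"
    by (rule Gamma1.spectrum_1[OF f28]) (simp_all add: cfg_simps del: replicate_Suc)
  have f26: "Gamma1.spectrum 26 (cfg mx 0 (Suc b)) (Suc ` Suc ` (+) (2*b+3) ` A) (N - 5)"
    by (rule Gamma1.spectrum_1[OF f27]) (simp_all add: cfg_simps del: replicate_Suc)
  have f25: "Gamma1.spectrum 25 (cfg mx 0 (Suc b)) (Suc ` Suc ` Suc ` (+) (2*b+3) ` A) (N - 4)"
    by (rule Gamma1.spectrum_1[OF f26]) (simp_all add: cfg_simps del: replicate_Suc)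
  have f24: "Gamma1.spectrum 24 (cfg mx 0 (Suc b)) (Suc ` Suc ` Suc ` Suc ` (+) (2*b+3) ` A) (N - 3)"
    by (rule Gamma1.spectrum_1[OF f25]) (simp_all add: cfg_simps del: replicate_Suc)
  have f23: "Gamma1.spectrum 23 (cfg mx 0 (Suc b)) (Suc ` Suc ` Suc ` Suc ` Suc ` (+) (2*b+3) ` A) (N - 2)"
    by (rule Gamma1.spectrum_1[OF f24]) (simp_all add: cfg_simps del: replicate_Suc)
  have f22: "Gamma1.spectrum 22 (cfg mx 0 (Suc b)) (Suc ` Suc ` Suc ` Suc ` Suc ` Suc ` (+) (2*b+3) ` A) (N - 1)"
    by (rule Gamma1.spectrum_1[OF f23]) (simp_all add: cfg_simps del: replicate_Suc)
  have "Gamma1.spectrum 21 (cfg mx 0 (Suc b)) (Suc ` Suc ` Suc ` Suc ` Suc ` Suc ` Suc ` (+) (2*b+3) ` A) N"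
    by (rule Gamma1.spectrum_1[OF f22]) (simp_all add: cfg_simps del: replicate_Suc)
  then show ?thesis by (rule Gamma1.spectrum_set_cong) (auto simp: image_image)
qed

lemma bit0_tail: "Gamma1.spectrum 31 (cfg mx (Suc b) 0) A (N - (2*b+4)) \<Longrightarrow>
    Gamma1.spectrum 27 (cfg mx 0 b) ((+) (2*b+4) ` A) N"
proof -
  assume h: "Gamma1.spectrum 31 (cfg mx (Suc b) 0) A (N - (2*b+4))"
  have f28: "Gamma1.spectrum 28 (cfg mx 1 b) ((+) (2*b+3) ` A) (N - 1)"
    using refill_loop[of mx 1 b A "N - 1"] h by (simp add: algebra_simps)
  have "Gamma1.spectrum 27 (cfg mx 0 b) (Suc ` (+) (2*b+3) ` A) N"
    by (rule Gamma1.spectrum_1[OF f28]) (simp_all add: cfg_simps del: replicate_Suc)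
  then show ?thesis by (rule Gamma1.spectrum_set_cong) (auto simp: image_image)
qed

lemma bit_choice:
  assumes v: "v \<in> {14,20}"
    and h0: "Gamma1.spectrum 31 (cfg mx (Suc b) 0) A0 (N - (2*b+5))"
    and h1: "Gamma1.spectrum 31 (cfg mx (Suc (Suc b)) 0) A1 (N - (2*b+13))"
    and disj: "(+) (2*b+5) ` A0 \<inter> (+) (2*b+13) ` A1 = {}"
  shows "Gamma1.spectrum v (cfg mx 0 (Suc b)) ((+) (2*b+5) ` A0 \<union> (+) (2*b+13) ` A1) N"
proof -
  have f21: "Gamma1.spectrum 21 (cfg mx 0 (Suc (Suc b))) ((+) (2*b+12) ` A1) (N - 1)"
    using bit1_tail[of mx "Suc b" A1 "N - 1"] h1 by (simp add: algebra_simps)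
  have f27: "Gamma1.spectrum 27 (cfg mx 0 b) ((+) (2*b+4) ` A0) (N - 1)"
    using bit0_tail[of mx b A0 "N - 1"] h0 by (simp add: algebra_simps)
  have d: "(+) (2*b+12) ` A1 \<inter> (+) (2*b+4) ` A0 = {}"
    using shift_disjoint[OF disj, of 1] by (auto simp: Int_commute)
  have sv: "succ1 v = [21,27]" "Suc 0 \<le> v" "v \<le> 45" "v \<noteq> 2" using v by auto
  have "Gamma1.spectrum v (cfg mx 0 (Suc b)) (Suc ` (+) (2*b+12) ` A1 \<union> Suc ` (+) (2*b+4) ` A0) N"
    by (rule Gamma1.spectrum_2) (insert f21 f27 d, simp add: sv cfg_simps del: replicate_Suc)+
  then show ?thesis by (rule Gamma1.spectrum_set_cong) (auto simp: image_image)
qed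

lemma mode_switch_tail: "Gamma1.spectrum 31 (cfg 2 (Suc (Suc b)) 0) A1 (N - (2*b+13)) \<Longrightarrow>
    Gamma1.spectrum 17 (cfg 2 0 (Suc b)) ((+) (2*b+13) ` A1) N"
proof -
  assume h1: "Gamma1.spectrum 31 (cfg 2 (Suc (Suc b)) 0) A1 (N - (2*b+13))"
  have f21: "Gamma1.spectrum 21 (cfg 2 0 (Suc (Suc b))) ((+) (2*b+12) ` A1) (N - 1)"
    using bit1_tail[of 2 "Suc b" A1 "N - 1"] h1 by (simp add: algebra_simps)
  have "Gamma1.spectrum 17 (cfg 2 0 (Suc b)) (Suc ` (+) (2*b+12) ` A1) N"
    by (rule Gamma1.spectrum_1[OF f21]) (simp_all add: cfg_simps del: replicate_Suc)
  then show ?thesis by (rule Gamma1.spectrum_set_cong) (auto simp: image_image)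
qed

lemma exit_mode2: "Gamma1.spectrum 20 (cfg 2 0 (Suc b)) B (N - 3) \<Longrightarrow>
    Gamma1.spectrum 10 (cfg 2 0 (Suc b)) ((+) 3 ` B) N"
proof -
  assume h: "Gamma1.spectrum 20 (cfg 2 0 (Suc b)) B (N - 3)"
  have f19: "Gamma1.spectrum 19 (Some ([], 1 # replicate (Suc b) 0)) (Suc ` B) (N - 2)"
    by (rule Gamma1.spectrum_1[OF h]) (simp_all add: cfg_simps del: replicate_Suc)
  have f18: "Gamma1.spectrum 18 (Some ([], 1 # replicate (Suc b) 0)) (Suc ` Suc ` B) (N - 1)"
    by (rule Gamma1.spectrum_1[OF f19]) (simp_all add: cfg_simps del: replicate_Suc)
  have "Gamma1.spectrum 10 (cfg 2 0 (Suc b)) (Suc ` {} \<union> Suc ` {} \<union> Suc ` {} \<union> Suc ` Suc ` Suc ` B) N"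
    by (rule Gamma1.spectrum_4) (insert f18, simp add: cfg_simps del: replicate_Suc)+
  then show ?thesis by (rule Gamma1.spectrum_set_cong) (auto simp: image_image)
qed

lemma exit_mode1: "Gamma1.spectrum 14 (cfg 1 0 (Suc b)) B (N - 4) \<Longrightarrow>
    Gamma1.spectrum 17 (cfg 2 0 (Suc b)) C (N - 3) \<Longrightarrow>
  (+) 4 ` B \<inter> (+) 3 ` C = {} \<Longrightarrow> Gamma1.spectrum 10 (cfg 1 0 (Suc b)) ((+) 4 ` B \<union> (+) 3 ` C) N"
proof -
  assume h: "Gamma1.spectrum 14 (cfg 1 0 (Suc b)) B (N - 4)" and hc: "Gamma1.spectrum 17 (cfg 2 0 (Suc b)) C (N - 3)"
    and disj: "(+) 4 ` B \<inter> (+) 3 ` C = {}"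
  have f13: "Gamma1.spectrum 13 (Some ([], 1 # replicate (Suc b) 0)) (Suc ` B) (N - 3)"
    by (rule Gamma1.spectrum_1[OF h]) (simp_all add: cfg_simps del: replicate_Suc)
  have f12: "Gamma1.spectrum 12 (Some ([], 1 # replicate (Suc b) 0)) (Suc ` Suc ` B) (N - 2)"
    by (rule Gamma1.spectrum_1[OF f13]) (simp_all add: cfg_simps del: replicate_Suc)
  have f11: "Gamma1.spectrum 11 (Some ([], 1 # replicate (Suc b) 0)) (Suc ` Suc ` Suc ` B) (N - 1)"
    by (rule Gamma1.spectrum_1[OF f12]) (simp_all add: cfg_simps del: replicate_Suc)
  have f16: "Gamma1.spectrum 16 (Some ([], 1 # replicate (Suc b) 0)) (Suc ` C) (N - 2)"
    by (rule Gamma1.spectrum_1[OF hc]) (simp_all add: cfg_simps del: replicate_Suc)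
  have f15: "Gamma1.spectrum 15 (Some ([], 1 # replicate (Suc b) 0)) (Suc ` Suc ` C) (N - 1)"
    by (rule Gamma1.spectrum_1[OF f16]) (simp_all add: cfg_simps del: replicate_Suc)
  have d: "Suc ` Suc ` Suc ` B \<inter> Suc ` Suc ` C = {}"
  proof (rule ccontr)
    assume "Suc ` Suc ` Suc ` B \<inter> Suc ` Suc ` C \<noteq> {}"
    then obtain x y where "x \<in> B" "y \<in> C" "Suc (Suc (Suc x)) = Suc (Suc y)" by auto
    then have "4 + x \<in> (+) 4 ` B \<inter> (+) 3 ` C" by (auto intro!: image_eqI[of _ _ y])
    then show False using disj by blast
  qed
  have "Gamma1.spectrum 10 (cfg 1 0 (Suc b)) (Suc ` {} \<union> Suc ` Suc ` Suc ` Suc ` B \<union>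
      Suc ` Suc ` Suc ` C \<union> Suc ` {}) N"
    by (rule Gamma1.spectrum_4) (insert f11 f15 d, simp add: cfg_simps del: replicate_Suc)+
  then show ?thesis by (rule Gamma1.spectrum_set_cong) (auto simp: image_image)
qed

lemma round_mode2:
  assumes h0: "Gamma1.spectrum 31 (cfg 2 (Suc (Suc (2*c))) 0) A0 (N - (8*c+13))"
    and h1: "Gamma1.spectrum 31 (cfg 2 (Suc (Suc (Suc (2*c)))) 0) A1 (N - (8*c+21))"
    and disj: "(+) (8*c+13) ` A0 \<inter> (+) (8*c+21) ` A1 = {}"
  shows "Gamma1.spectrum 7 (cfg 2 c 0) ((+) (8*c+13) ` A0 \<union> (+) (8*c+21) ` A1) N"
proof -
  let ?B = "(+) (4*c+7) ` A0 \<union> (+) (4*c+15) ` A1"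
  have "(+) (4*c+7) ` A0 \<inter> (+) (4*c+15) ` A1 = {}"
    using shift_disjoint[OF disj, of "4*c+6"] by (simp add: algebra_simps)
  then have "Gamma1.spectrum 20 (cfg 2 0 (Suc (Suc (2*c)))) ?B (N - (4*c+6))"
    using bit_choice[of 20 2 "Suc (2*c)" A0 "N - (4*c+6)" A1] h0 h1 by (simp add: algebra_simps)
  then have "Gamma1.spectrum 10 (cfg 2 0 (Suc (Suc (2*c)))) ((+) 3 ` ?B) (N - (4*c+3))"
    using exit_mode2[of "Suc (2*c)" _ "N - (4*c+3)"] by (simp add: algebra_simps)
  then have "Gamma1.spectrum 10 (cfg 2 c 2) ((+) (4*c) ` (+) 3 ` ?B) (N - 3)"
    using doubling_loop[of 2 2 c _ "N - 3"] by (simp add: algebra_simps)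
  then have "Gamma1.spectrum 9 (cfg 2 c 1) (Suc ` (+) (4*c) ` (+) 3 ` ?B) (N - 2)"
    by (rule Gamma1.spectrum_1) (simp_all add: cfg_simps replicate_two del: replicate_Suc)
  then have "Gamma1.spectrum 8 (cfg 2 c 1) (Suc ` Suc ` (+) (4*c) ` (+) 3 ` ?B) (N - 1)"
    by (rule Gamma1.spectrum_1) (simp_all add: cfg_simps replicate_two del: replicate_Suc)
  then have "Gamma1.spectrum 7 (cfg 2 c 0) (Suc ` Suc ` Suc ` (+) (4*c) ` (+) 3 ` ?B) N"
    by (rule Gamma1.spectrum_1) (simp_all add: cfg_simps replicate_two del: replicate_Suc)
  then show ?thesis by (rule Gamma1.spectrum_set_cong) (auto simp: image_image image_Un algebra_simps)
qed

lemma round_mode1: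
  assumes h0: "Gamma1.spectrum 31 (cfg 1 (Suc (Suc (2*c))) 0) A0 (N - (8*c+14))"
    and h1: "Gamma1.spectrum 31 (cfg 1 (Suc (Suc (Suc (2*c)))) 0) A1 (N - (8*c+22))"
    and hs: "Gamma1.spectrum 31 (cfg 2 (Suc (Suc (Suc (2*c)))) 0) AS (N - (8*c+21))"
    and d01: "(+) (8*c+14) ` A0 \<inter> (+) (8*c+22) ` A1 = {}"
    and d0s: "(+) (8*c+14) ` A0 \<inter> (+) (8*c+21) ` AS = {}"
    and d1s: "(+) (8*c+22) ` A1 \<inter> (+) (8*c+21) ` AS = {}"
  shows "Gamma1.spectrum 7 (cfg 1 c 0) ((+) (8*c+14) ` A0 \<union> (+) (8*c+22) ` A1 \<union> (+) (8*c+21) ` AS) N"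
proof -
  let ?B = "(+) (4*c+7) ` A0 \<union> (+) (4*c+15) ` A1"
  let ?E = "(+) 4 ` ?B \<union> (+) 3 ` (+) (4*c+15) ` AS"
  have "(+) (4*c+7) ` A0 \<inter> (+) (4*c+15) ` A1 = {}"
    using shift_disjoint[OF d01, of "4*c+7"] by (simp add: algebra_simps)
  then have keep: "Gamma1.spectrum 14 (cfg 1 0 (Suc (Suc (2*c)))) ?B (N - (4*c+7))"
    using bit_choice[of 14 1 "Suc (2*c)" A0 "N - (4*c+7)" A1] h0 h1 by (simp add: algebra_simps)
  have switch: "Gamma1.spectrum 17 (cfg 2 0 (Suc (Suc (2*c)))) ((+) (4*c+15) ` AS) (N - (4*c+6))"
    using mode_switch_tail[of "Suc (2*c)" AS "N - (4*c+6)"] hs by (simp add: algebra_simps)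
  have "(+) (4*c+11) ` A0 \<inter> (+) (4*c+18) ` AS = {}" "(+) (4*c+19) ` A1 \<inter> (+) (4*c+18) ` AS = {}"
    using shift_disjoint[OF d0s, of "4*c+3"] shift_disjoint[OF d1s, of "4*c+3"] by (simp_all add: algebra_simps)
  then have "(+) 4 ` ?B \<inter> (+) 3 ` (+) (4*c+15) ` AS = {}"
    by (auto simp: image_image image_Un algebra_simps)
  then have "Gamma1.spectrum 10 (cfg 1 0 (Suc (Suc (2*c)))) ?E (N - (4*c+3))"
    using exit_mode1[of "Suc (2*c)" _ "N - (4*c+3)"] keep switch by (simp add: algebra_simps)
  then have "Gamma1.spectrum 10 (cfg 1 c 2) ((+) (4*c) ` ?E) (N - 3)"
    using doubling_loop[of 1 2 c _ "N - 3"] by (simp add: algebra_simps)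
  then have "Gamma1.spectrum 9 (cfg 1 c 1) (Suc ` (+) (4*c) ` ?E) (N - 2)"
    by (rule Gamma1.spectrum_1) (simp_all add: cfg_simps replicate_two del: replicate_Suc)
  then have "Gamma1.spectrum 8 (cfg 1 c 1) (Suc ` Suc ` (+) (4*c) ` ?E) (N - 1)"
    by (rule Gamma1.spectrum_1) (simp_all add: cfg_simps replicate_two del: replicate_Suc)
  then have "Gamma1.spectrum 7 (cfg 1 c 0) (Suc ` Suc ` Suc ` (+) (4*c) ` ?E) N"
    by (rule Gamma1.spectrum_1) (simp_all add: cfg_simps replicate_two del: replicate_Suc)
  then show ?thesis by (rule Gamma1.spectrum_set_cong) (auto simp: image_image image_Un algebra_simps)
qed

lemma round_branches_disjoint:
  "(+) (8*c+13) ` mode2_lengths (Suc (Suc (2*c))) \<inter> (+) (8*c+21) ` mode2_lengths (Suc (Suc (Suc (2*c)))) = {}"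
  "(+) (8*c+14) ` mode1_lengths (Suc (Suc (2*c))) \<inter> (+) (8*c+22) ` mode1_lengths (Suc (Suc (Suc (2*c)))) = {}"
  "(+) (8*c+14) ` mode1_lengths (Suc (Suc (2*c))) \<inter> (+) (8*c+21) ` mode2_lengths (Suc (Suc (Suc (2*c)))) = {}"
  "(+) (8*c+22) ` mode1_lengths (Suc (Suc (Suc (2*c)))) \<inter> (+) (8*c+21) ` mode2_lengths (Suc (Suc (Suc (2*c)))) = {}"
  using shift_disjoint[OF mode2_branches_disjoint(1)[of c], of 1]
    shift_disjoint[OF mode1_branches_disjoint(1)[of c], of 1]
    shift_disjoint[OF mode1_branches_disjoint(2)[of c], of 1]
    shift_disjoint[OF mode1_branches_disjoint(3)[of c], of 1]
  by (simp_all add: algebra_simps)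

lemma round_end_spectrum_mode2:
  assumes "Gamma1.spectrum 31 (cfg 2 (Suc (Suc (2*c))) 0) (mode2_lengths (Suc (Suc (2*c)))) (N - 1 - (8*c+13))"
    and "Gamma1.spectrum 31 (cfg 2 (Suc (Suc (Suc (2*c)))) 0) (mode2_lengths (Suc (Suc (Suc (2*c))))) (N - 1 - (8*c+21))"
  shows "Gamma1.spectrum 31 (cfg 2 (Suc c) 0) (mode2_lengths (Suc c)) N"
proof -
  let ?R = "(+) (8*c+13) ` mode2_lengths (Suc (Suc (2*c))) \<union> (+) (8*c+21) ` mode2_lengths (Suc (Suc (Suc (2*c))))"
  have round: "Gamma1.spectrum 7 (cfg 2 c 0) ?R (N - 1)"
    using round_mode2[OF assms round_branches_disjoint(1)] by simp
  have drain: "Gamma1.spectrum 32 (cfg 2 c 0) ((+) (4*c+7) ` {drain_length c}) (N - 1)"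
    by (rule drain_pass) (rule drain_spectrum)
  have disj: "?R \<inter> (+) (4*c+7) ` {drain_length c} = {}"
  proof (rule ccontr)
    assume "\<not> ?thesis"
    then obtain x where x: "x \<in> ?R" "x = 2*c*c+10*c+10" by (auto simp: drain_length_def)
    then have "Suc x \<in> (+) (8*c+14) ` mode2_lengths (Suc (Suc (2*c))) \<union>
        (+) (8*c+22) ` mode2_lengths (Suc (Suc (Suc (2*c))))"
      by (auto intro: image_eqI)
    then show False using mode2_branches_disjoint(2,3)[of c] x(2) by auto
  qed
  have "Gamma1.spectrum 31 (cfg 2 (Suc c) 0) (Suc ` ?R \<union> Suc ` (+) (4*c+7) ` {drain_length c} \<union> Suc ` {}) N"
    by (rule Gamma1.spectrum_3) (insert round drain disj, simp add: cfg_simps del: replicate_Suc)+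
  then show ?thesis
    by (rule Gamma1.spectrum_set_cong, subst mode2_lengths_Suc[of c])
      (simp add: image_image image_Un drain_length_def algebra_simps)
qed

lemma round_end_spectrum_mode1:
  assumes "Gamma1.spectrum 31 (cfg 1 (Suc (Suc (2*c))) 0) (mode1_lengths (Suc (Suc (2*c)))) (N - 1 - (8*c+14))"
    and "Gamma1.spectrum 31 (cfg 1 (Suc (Suc (Suc (2*c)))) 0) (mode1_lengths (Suc (Suc (Suc (2*c))))) (N - 1 - (8*c+22))"
    and "Gamma1.spectrum 31 (cfg 2 (Suc (Suc (Suc (2*c)))) 0) (mode2_lengths (Suc (Suc (Suc (2*c))))) (N - 1 - (8*c+21))"
  shows "Gamma1.spectrum 31 (cfg 1 (Suc c) 0) (mode1_lengths (Suc c)) N"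
proof -
  let ?R = "(+) (8*c+14) ` mode1_lengths (Suc (Suc (2*c))) \<union> (+) (8*c+22) ` mode1_lengths (Suc (Suc (Suc (2*c))))
    \<union> (+) (8*c+21) ` mode2_lengths (Suc (Suc (Suc (2*c))))"
  have round: "Gamma1.spectrum 7 (cfg 1 c 0) ?R (N - 1)"
    by (rule round_mode1[OF assms round_branches_disjoint(2-4)])
  have "Gamma1.spectrum 31 (cfg 1 (Suc c) 0) (Suc ` ?R \<union> Suc ` {} \<union> Suc ` {}) N"
    by (rule Gamma1.spectrum_3) (insert round drain_mode1_dead, simp add: cfg_simps del: replicate_Suc)+
  then show ?thesis
    by (rule Gamma1.spectrum_set_cong, subst mode1_lengths_Suc[of c]) (simp add: image_image image_Un algebra_simps)
qed

text \<open>The induction on the cutoff is what makes the recursion to the larger counters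
  \<open>2 c + 2\<close> and \<open>2 c + 3\<close> well founded.\<close>
lemma round_end_spectrum:
  "Gamma1.spectrum 31 (cfg 1 (Suc c) 0) (mode1_lengths (Suc c)) N \<and>
   Gamma1.spectrum 31 (cfg 2 (Suc c) 0) (mode2_lengths (Suc c)) N"
proof (induction N arbitrary: c rule: less_induct)
  case (less N)
  show ?case
  proof (cases N)
    case 0
    then show ?thesis by (simp add: Gamma1.spectrum_0)
  next
    case (Suc N')
    then have "N - 1 - k < N" for k by simp
    then have mode1: "Gamma1.spectrum 31 (cfg 1 (Suc d) 0) (mode1_lengths (Suc d)) (N - 1 - k)"
      and mode2: "Gamma1.spectrum 31 (cfg 2 (Suc d) 0) (mode2_lengths (Suc d)) (N - 1 - k)" for d k
      using less.IH by blast+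
    show ?thesis
      using round_end_spectrum_mode1[OF mode1 mode1 mode2] round_end_spectrum_mode2[OF mode2 mode2] by blast
  qed
qed

lemma initial_spectrum: "Gamma1.spectrum 1 (Some ([], [])) ((+) 4 ` mode1_lengths 1) N"
proof -
  let ?R = "(+) 14 ` mode1_lengths 2 \<union> (+) 22 ` mode1_lengths 3 \<union> (+) 21 ` mode2_lengths 3"
  have "Gamma1.spectrum 7 (cfg 1 0 0) ?R (N - 5)"
    using round_mode1[OF _ _ _ round_branches_disjoint(2-4)[of 0], of "N - 5"]
      round_end_spectrum[of 1 "N - 5 - 14"] round_end_spectrum[of 2 "N - 5 - 22"]
      round_end_spectrum[of 2 "N - 5 - 21"]
    by (simp add: numeral_2_eq_2 numeral_3_eq_3)
  then have "Gamma1.spectrum 6 (cfg 1 1 0) (Suc ` ?R) (N - 4)"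
    by (rule Gamma1.spectrum_1) (simp_all add: cfg_simps del: replicate_Suc)
  moreover have "Suc ` ?R = mode1_lengths 1"
    using mode1_lengths_Suc[of 0] by (simp add: image_image image_Un numeral_2_eq_2 numeral_3_eq_3)
  ultimately have "Gamma1.spectrum 6 (Some ([1, 0], [1])) (mode1_lengths 1) (N - 4)" by simp
  then have "Gamma1.spectrum 5 (Some ([1, 0], [1])) (Suc ` mode1_lengths 1) (N - 3)"
    by (rule Gamma1.spectrum_1) (simp_all add: cfg_simps)
  then have "Gamma1.spectrum 4 (Some ([1], [1])) (Suc ` Suc ` mode1_lengths 1) (N - 2)"
    by (rule Gamma1.spectrum_1) (simp_all add: cfg_simps)
  then have "Gamma1.spectrum 3 (Some ([1], [])) (Suc ` Suc ` Suc ` mode1_lengths 1) (N - 1)"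
    by (rule Gamma1.spectrum_1) (simp_all add: cfg_simps)
  then have "Gamma1.spectrum 1 (Some ([], [])) (Suc ` Suc ` Suc ` Suc ` mode1_lengths 1) N"
    by (rule Gamma1.spectrum_1) (rule succ1_simps(1), simp_all)
  then show ?thesis by (rule Gamma1.spectrum_set_cong) (auto simp: image_image)
qed

lemma G_Gamma1: "G 45 rho1 Gamma1.edges n = (if 1 \<le> n \<and> n - 1 \<in> (+) 4 ` mode1_lengths 1 then 1 else 0)"
  by (rule Gamma1.G_eq_indicator[OF rho1_simps(1) initial_spectrum])

section \<open>Binary words\<close>

definition binary_value :: "nat \<Rightarrow> nat list \<Rightarrow> nat" where
  "binary_value a ws = foldl (\<lambda>v b. 2 * v + b) a ws"

lemma binary_value_Cons: "binary_value a (b # ws) = binary_value (2 * a + b) ws"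
  by (simp add: binary_value_def)

lemma binary_value_append: "binary_value a (xs @ ys) = binary_value (binary_value a xs) ys"
  by (simp add: binary_value_def)

lemma binary_value_eq: "binary_value a ws = a * 2 ^ length ws + binary_value 0 ws"
proof (induction ws arbitrary: a)
  case (Cons b ws)
  show ?case
    using Cons.IH[of "2 * a + b"] Cons.IH[of b] by (simp add: binary_value_Cons algebra_simps)
qed (simp add: binary_value_def)

lemma binary_value_less: "set ws \<subseteq> {0, 1} \<Longrightarrow> binary_value 0 ws < 2 ^ length ws"
proof (induction ws)
  case (Cons b ws)
  have "b * 2 ^ length ws \<le> 2 ^ length ws" using Cons.prems by auto
  moreover have "binary_value 0 ws < 2 ^ length ws" using Cons by auto
  moreover have "binary_value 0 (b # ws) = b * 2 ^ length ws + binary_value 0 ws"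
    using binary_value_eq[of b ws] by (simp add: binary_value_Cons)
  moreover have "(2::nat) ^ length (b # ws) = 2 ^ length ws + 2 ^ length ws" by simp
  ultimately show ?case by linarith
qed (simp add: binary_value_def)

lemma binary_value_div: "set ws \<subseteq> {0, 1} \<Longrightarrow> binary_value a ws div 2 ^ length ws = a"
  using binary_value_eq[of a ws] binary_value_less[of ws] by simp

lemma binary_value_bit:
  assumes w: "set w \<subseteq> {0, 1}" and j: "j < length w"
  shows "odd (binary_value 1 w div 2 ^ (length w - Suc j)) \<longleftrightarrow> w ! j = 1"
proof -
  have w_split: "w = take j w @ [w ! j] @ drop (Suc j) w"
    using j by (simp add: Cons_nth_drop_Suc)
  have "set (drop (Suc j) w) \<subseteq> {0, 1}" using w by (meson order_trans set_drop_subset)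
  then have "binary_value 1 w div 2 ^ (length w - Suc j) = 2 * binary_value 1 (take j w) + w ! j"
    using binary_value_div[of "drop (Suc j) w"] w_split
    by (metis append_assoc binary_value_append binary_value_Cons binary_value_def foldl_Nil
        length_drop)
  moreover have "w ! j \<in> {0, 1}" using w nth_mem[OF j] by blast
  ultimately show ?thesis by auto
qed

lemma G_Gamma1_window:
  assumes w: "set w \<subseteq> {0, 1}" and j: "j < length w"
  shows "G 45 rho1 Gamma1.edges (path_cost (binary_value 1 w) (length w) - 3 + j) = w ! j"
proof -
  let ?V = "binary_value 1 w" and ?l = "length w"
  have V: "?V div 2 ^ ?l = 1" using binary_value_div[OF w] .
  have cost: "8 \<le> path_cost ?V ?l" using path_cost_ge[of ?V ?l ?l] V by simp
  have "path_cost ?V ?l - 3 + j - 1 \<in> (+) 4 ` mode1_lengths 1 \<longleftrightarrow> w ! j = 1"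
  proof
    assume "path_cost ?V ?l - 3 + j - 1 \<in> (+) 4 ` mode1_lengths 1"
    then obtain V' l' j' where V': "V' div 2 ^ l' = 1" "j' < l'" "odd (V' div 2 ^ (l' - Suc j'))"
      "path_cost ?V ?l - 3 + j - 1 + 8 * 1 = path_cost V' l' + j' + 4"
      unfolding mem_shift_mode1_lengths by blast
    then have "?V = V' \<and> ?l = l' \<and> j = j'"
      using path_cost_inj[of 1 ?V ?l V' l' j j'] V j cost by simp
    then show "w ! j = 1" using V'(3) binary_value_bit[OF w j] by simp
  next
    assume "w ! j = 1"
    then have "odd (?V div 2 ^ (?l - Suc j))" using binary_value_bit[OF w j] by simp
    then show "path_cost ?V ?l - 3 + j - 1 \<in> (+) 4 ` mode1_lengths 1"
      unfolding mem_shift_mode1_lengths using V j cost by (intro exI[of _ ?V] exI[of _ ?l] exI[of _ j]) simp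
  qed
  moreover have "w ! j \<in> {0, 1}" using w nth_mem[OF j] by blast
  ultimately show ?thesis using cost by (auto simp: G_Gamma1)
qed

theorem lemma2p3:
  shows "\<exists>m rho E. two_stack_automaton m rho E \<and>
           (\<forall>n. G m rho E n \<in> {0, 1}) \<and>
           (\<forall>w :: nat list. set w \<subseteq> {0, 1} \<longrightarrow>
              (\<exists>k\<ge>1. \<forall>j < length w. G m rho E (k + j) = w ! j))"
proof -
  have "\<exists>k\<ge>1. \<forall>j < length w. G 45 rho1 Gamma1.edges (k + j) = w ! j" if "set w \<subseteq> {0, 1}" for w
  proof (intro exI conjI allI impI)
    show "1 \<le> path_cost (binary_value 1 w) (length w) - 3"
      using path_cost_ge[of "binary_value 1 w" "length w" "length w"] binary_value_div[OF that] by simp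
    show "G 45 rho1 Gamma1.edges (path_cost (binary_value 1 w) (length w) - 3 + j) = w ! j"
      if "j < length w" for j
      using G_Gamma1_window \<open>set w \<subseteq> {0, 1}\<close> that .
  qed
  moreover have "G 45 rho1 Gamma1.edges n \<in> {0, 1}" for n by (simp add: G_Gamma1)
  ultimately show ?thesis using Gamma1_two_stack_automaton by blast
qed

end
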